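(* Let $J\subset\mathbb{R}$ be a compact interval, $c$ an endpoint of $J$, and let $f=\sum_{k\ge k_0}c_kg_k\in C^\infty(J)$ be a series satisfying conditions (i)–(iii) below (so $f$ is pliable at $c$). Then: (a) the partial sums $\sum_{k=k_0}^l c_kg_k$ converge to $f$ in the $C^r$ norm for each $r\in\mathbb{Z}_{\ge0}$; (b) for each $r\in\mathbb{Z}_{\ge0}$, $f^{(r)}(c)=0$ and $f^{(r)}=\sum_{k\ge k_0}c_kg_k^{(r)}$ is a series satisfying (i)–(iii), so $f^{(r)}$ is pliable at $c$; (c) $hf+g$ is pliable at $c$ for every $h,g\in C^\infty(J)$ with $\mathrm{supp}\,g\subset J\setminus\{c\}$; (d) $f\circ\iota$ is pliable at $\iota^{-1}(c)$ for each isometry $\iota$ of $\mathbb{R}$; (e) if $d\colon K\to J$ is a diffeomorphism from a compact interval $K$, then $f\circ d$ is pliable at $d^{-1}(c)$.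
   Context: A sequence $(a_k)$ grows at most exponentially if $(2^{k\gamma}a_k)$ is bounded for some $\gamma\in\mathbb{R}$; $(a_k)$ converges super-exponentially to $a$ if $2^{k\gamma}(a_k-a)\to0$ for every $\gamma\in\mathbb{R}$. The $C^r$ norm is $\|u\|_r=\sum_{i=0}^r\max|u^{(i)}|$. Given $k_0\in\mathbb{Z}$ and an endpoint $c$ of a compact interval $J$, $f\in C^\infty(J)$ is pliable at $c$ if $f=\sum_{k\ge k_0}c_kg_k$ where (i) $(c_k)$ is a sequence of positive reals converging super-exponentially to $0$; (ii) $g_k\in C^\infty(J)$, $\{\mathrm{supp}\,g_k\}_{k\ge k_0}$ is a locally finite family of compact subsets of $J\setminus\{c\}$, and for every $r$ the sequence of $C^r$ norms of $g_k$ grows at most exponentially; (iii) there is $L>0$ such that whenever $0<2\varepsilon<$ length of $J$ and $J_\varepsilon$ is the set of indices $k$ for which $\mathrm{supp}\,g_k$ meets $\{x\in J:\varepsilon\le|x-c|\le2\varepsilon\}$, then $J_\varepsilon$ has at most $L$ elements and $2^{-kL}\le\varepsilon$ for every $k\in J_\varepsilon$. *)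

theory Defs
  imports "HOL-Analysis.Analysis"
begin

definition jderiv :: "real set \<Rightarrow> (real \<Rightarrow> real) \<Rightarrow> real \<Rightarrow> real" where
  "jderiv J u x = (THE D. (u has_real_derivative D) (at x within J))"

definition jderivs :: "real set \<Rightarrow> nat \<Rightarrow> (real \<Rightarrow> real) \<Rightarrow> real \<Rightarrow> real" where
  "jderivs J n u = ((\<lambda>v. jderiv J v) ^^ n) u"

definition smooth_on_J :: "real set \<Rightarrow> (real \<Rightarrow> real) \<Rightarrow> bool" where
  "smooth_on_J J u \<longleftrightarrow>
     (\<forall>n. \<forall>x\<in>J. (jderivs J n u has_real_derivative jderivs J (Suc n) u x) (at x within J))"

definition cr_norm :: "real set \<Rightarrow> nat \<Rightarrow> (real \<Rightarrow> real) \<Rightarrow> real" where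
  "cr_norm J r u = (\<Sum>i\<le>r. Sup ((\<lambda>x. \<bar>jderivs J i u x\<bar>) ` J))"

definition jsupp :: "real set \<Rightarrow> (real \<Rightarrow> real) \<Rightarrow> real set" where
  "jsupp J u = closure {x\<in>J. u x \<noteq> 0}"

definition grows_at_most_exp :: "int \<Rightarrow> (int \<Rightarrow> real) \<Rightarrow> bool" where
  "grows_at_most_exp k0 a \<longleftrightarrow>
     (\<exists>\<gamma>::real. \<exists>B. \<forall>k\<ge>k0. \<bar>2 powr (real_of_int k * \<gamma>) * a k\<bar> \<le> B)"

definition superexp_conv :: "(int \<Rightarrow> real) \<Rightarrow> real \<Rightarrow> bool" where
  "superexp_conv a l \<longleftrightarrow>
     (\<forall>\<gamma>::real. ((\<lambda>k. 2 powr (real_of_int k * \<gamma>) * (a k - l)) \<longlongrightarrow> 0) at_top)"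

definition pliable_series ::
  "real \<Rightarrow> real \<Rightarrow> real \<Rightarrow> int \<Rightarrow> (int \<Rightarrow> real) \<Rightarrow> (int \<Rightarrow> real \<Rightarrow> real) \<Rightarrow> bool" where
  "pliable_series a b c k0 cs gs \<longleftrightarrow>
     \<comment> \<open>(i)\<close>
     (\<forall>k\<ge>k0. cs k > 0) \<and> superexp_conv cs 0 \<and>
     \<comment> \<open>(ii)\<close>
     (\<forall>k\<ge>k0. smooth_on_J {a..b} (gs k) \<and> compact (jsupp {a..b} (gs k)) \<and>
                jsupp {a..b} (gs k) \<subseteq> {a..b} - {c}) \<and>
     (\<forall>x\<in>{a..b} - {c}. \<exists>e>0. finite {k. k \<ge> k0 \<and> jsupp {a..b} (gs k) \<inter> ball x e \<noteq> {}}) \<and>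
     (\<forall>r. grows_at_most_exp k0 (\<lambda>k. cr_norm {a..b} r (gs k))) \<and>
     \<comment> \<open>(iii)\<close>
     (\<exists>L::real. L > 0 \<and>
        (\<forall>\<epsilon>::real. 0 < 2 * \<epsilon> \<and> 2 * \<epsilon> < b - a \<longrightarrow>
           (let J\<epsilon> = {k. k \<ge> k0 \<and>
                     jsupp {a..b} (gs k) \<inter> {x\<in>{a..b}. \<epsilon> \<le> \<bar>x - c\<bar> \<and> \<bar>x - c\<bar> \<le> 2 * \<epsilon>} \<noteq> {}}
            in finite J\<epsilon> \<and> real (card J\<epsilon>) \<le> L \<and>
               (\<forall>k\<in>J\<epsilon>. 2 powr (- (real_of_int k * L)) \<le> \<epsilon>))))"

definition pliable :: "real set \<Rightarrow> real \<Rightarrow> (real \<Rightarrow> real) \<Rightarrow> bool" where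
  "pliable J c f \<longleftrightarrow>
     (\<exists>a b. a < b \<and> J = {a..b} \<and> (c = a \<or> c = b) \<and> smooth_on_J J f \<and>
        (\<exists>k0 cs gs. pliable_series a b c k0 cs gs \<and>
           (\<forall>x\<in>J. ((\<lambda>k. cs k * gs k x) has_sum f x) {k0..})))"

definition diffeo_J :: "real set \<Rightarrow> real set \<Rightarrow> (real \<Rightarrow> real) \<Rightarrow> bool" where
  "diffeo_J K J d \<longleftrightarrow> bij_betw d K J \<and> smooth_on_J K d \<and> smooth_on_J J (the_inv_into K d)"

end

theory Submission
  imports Defs
begin

text \<open>
  Since \<open>c\<^sub>k\<close> decays faster than any exponential while \<open>\<parallel>g\<^sub>k\<parallel>\<^sub>r\<close> grows at most
  exponentially, the weighted norms \<open>c\<^sub>k \<parallel>g\<^sub>k\<parallel>\<^sub>r\<close> are summable. By the Weierstrass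
  M-test every differentiated series converges uniformly, hence to the corresponding derivative
  of \<open>f\<close>; this gives (a), and (b) follows because no \<open>g\<^sub>k\<close> is supported at \<open>c\<close> and
  differentiation does not enlarge supports.

  In (c)--(e) the new terms (\<open>h g\<^sub>k\<close>, with \<open>g\<close> absorbed into the first one, resp. \<open>g\<^sub>k \<circ> d\<close>)
  satisfy (i) and (ii) directly. Condition (iii) survives only in a weak form: a diffeomorphism
  distorts distances to \<open>c\<close> by bounded factors, so an annulus at scale \<open>\<epsilon>\<close> meets boundedly many
  dyadic annuli of the old series, giving at most \<open>N\<close> indices with \<open>2 powr (- k L) \<le> C \<epsilon>\<close> at small
  scales. Shifting the index \<open>k\<close> by a large \<open>m\<close> restores (iii): the finitely many terms seen at
  large scales are harmless, and the factor \<open>2 powr (- m L)\<close> absorbs \<open>C\<close>.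
\<close>

section \<open>Derivatives on a compact interval\<close>

lemma at_within_Icc_nontrivial: "(a::real) < b \<Longrightarrow> x \<in> {a..b} \<Longrightarrow> at x within {a..b} \<noteq> bot"
  using trivial_limit_within[of x "{a..b}"] islimpt_Icc[of a b x] by auto

lemma jderiv_eqI:
  assumes "(a::real) < b" "x \<in> {a..b}" "(u has_real_derivative D) (at x within {a..b})"
  shows "jderiv {a..b} u x = D"
  unfolding jderiv_def
proof (rule the_equality)
  show "(u has_real_derivative D) (at x within {a..b})" by fact
  fix D' assume "(u has_real_derivative D') (at x within {a..b})"
  then show "D' = D" using has_field_derivative_unique assms at_within_Icc_nontrivial by blast
qed

lemma jderivs_0 [simp]: "jderivs J 0 u = u"
  by (simp add: jderivs_def)

lemma jderivs_Suc: "jderivs J (Suc n) u = jderiv J (jderivs J n u)"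
  by (simp add: jderivs_def)

lemma jderivs_jderivs: "jderivs J m (jderivs J n u) = jderivs J (m + n) u"
  by (simp add: jderivs_def funpow_add)

lemma smooth_on_J_has_derivative:
  "smooth_on_J J u \<Longrightarrow> x \<in> J \<Longrightarrow> (jderivs J n u has_real_derivative jderivs J (Suc n) u x) (at x within J)"
  by (simp add: smooth_on_J_def)

lemma smooth_on_J_jderivs: "smooth_on_J J u \<Longrightarrow> smooth_on_J J (jderivs J n u)"
  unfolding smooth_on_J_def jderivs_jderivs by (metis add_Suc)

lemma smooth_on_J_jderiv: "smooth_on_J J u \<Longrightarrow> smooth_on_J J (jderiv J u)"
  using smooth_on_J_jderivs[of J u "Suc 0"] by (simp add: jderivs_Suc)

lemma continuous_on_jderivs: "smooth_on_J J u \<Longrightarrow> continuous_on J (jderivs J n u)"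
  by (meson DERIV_continuous continuous_at_imp_continuous_on continuous_on_eq_continuous_within
      smooth_on_J_has_derivative)

lemma smooth_on_J_imp_continuous_on: "smooth_on_J J u \<Longrightarrow> continuous_on J u"
  using continuous_on_jderivs[of J u 0] by simp

lemma smooth_on_J_by_derivs:
  assumes ab: "(a::real) < b"
    and R: "\<And>n x. x \<in> {a..b} \<Longrightarrow> (R n has_real_derivative R (Suc n) x) (at x within {a..b})"
    and u: "\<And>x. x \<in> {a..b} \<Longrightarrow> u x = R 0 x"
  shows "smooth_on_J {a..b} u \<and> (\<forall>n. \<forall>x\<in>{a..b}. jderivs {a..b} n u x = R n x)"
proof -
  have deriv: "(jderivs {a..b} n u has_real_derivative R (Suc n) x) (at x within {a..b})"
    if "\<forall>y\<in>{a..b}. jderivs {a..b} n u y = R n y" "x \<in> {a..b}" for n x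
    by (rule has_field_derivative_transform_within[OF R[OF that(2)] zero_less_one that(2)])
       (use that in auto)
  have eq: "\<forall>x\<in>{a..b}. jderivs {a..b} n u x = R n x" for n
  proof (induction n)
    case 0
    then show ?case using u by simp
  next
    case (Suc n)
    then show ?case unfolding jderivs_Suc using jderiv_eqI[OF ab] deriv by blast
  qed
  then have "smooth_on_J {a..b} u"
    unfolding smooth_on_J_def using deriv by simp
  then show ?thesis using eq by blast
qed

lemma smooth_on_J_cong:
  assumes "(a::real) < b" "smooth_on_J {a..b} u" "\<And>x. x \<in> {a..b} \<Longrightarrow> v x = u x"
  shows "smooth_on_J {a..b} v"
  using smooth_on_J_by_derivs[OF assms(1), of "\<lambda>n. jderivs {a..b} n u" v]
    assms smooth_on_J_has_derivative by auto

lemma smooth_on_J_const: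
  assumes "(a::real) < b"
  shows "smooth_on_J {a..b} (\<lambda>x. C)"
  using smooth_on_J_by_derivs[OF assms, where R="\<lambda>n x. if n = 0 then C else 0"] by auto

lemma smooth_on_J_affine:
  assumes "(a::real) < b"
  shows "smooth_on_J {a..b} (\<lambda>x. s * x + t)"
  by (rule smooth_on_J_by_derivs[OF assms,
        where R="\<lambda>n x. if n = 0 then s * x + t else if n = 1 then s else 0", THEN conjunct1])
     (auto intro!: derivative_eq_intros)

lemma smooth_on_J_add:
  assumes ab: "(a::real) < b" and u: "smooth_on_J {a..b} u" and v: "smooth_on_J {a..b} v"
  shows "smooth_on_J {a..b} (\<lambda>x. u x + v x)"
  by (rule smooth_on_J_by_derivs[OF ab,
        where R="\<lambda>n x. jderivs {a..b} n u x + jderivs {a..b} n v x", THEN conjunct1])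
     (auto intro!: derivative_eq_intros smooth_on_J_has_derivative[OF u] smooth_on_J_has_derivative[OF v])

lemma smooth_on_J_cmult:
  assumes ab: "(a::real) < b" and u: "smooth_on_J {a..b} u"
  shows "smooth_on_J {a..b} (\<lambda>x. C * u x)"
  by (rule smooth_on_J_by_derivs[OF ab, where R="\<lambda>n x. C * jderivs {a..b} n u x", THEN conjunct1])
     (auto intro!: derivative_eq_intros smooth_on_J_has_derivative[OF u])

lemma jderivs_diff:
  assumes ab: "(a::real) < b" and u: "smooth_on_J {a..b} u" and v: "smooth_on_J {a..b} v"
  shows "smooth_on_J {a..b} (\<lambda>x. u x - v x) \<and>
    (\<forall>n. \<forall>x\<in>{a..b}. jderivs {a..b} n (\<lambda>x. u x - v x) x = jderivs {a..b} n u x - jderivs {a..b} n v x)"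
  by (rule smooth_on_J_by_derivs[OF ab, where R="\<lambda>n x. jderivs {a..b} n u x - jderivs {a..b} n v x"])
     (auto intro!: derivative_eq_intros smooth_on_J_has_derivative[OF u] smooth_on_J_has_derivative[OF v])

lemma jderivs_sum:
  assumes ab: "(a::real) < b" and u: "\<And>k. k \<in> F \<Longrightarrow> smooth_on_J {a..b} (g k)"
  shows "smooth_on_J {a..b} (\<lambda>x. \<Sum>k\<in>F. c k * g k x) \<and>
    (\<forall>n. \<forall>x\<in>{a..b}. jderivs {a..b} n (\<lambda>x. \<Sum>k\<in>F. c k * g k x) x = (\<Sum>k\<in>F. c k * jderivs {a..b} n (g k) x))"
  by (rule smooth_on_J_by_derivs[OF ab, where R="\<lambda>n x. \<Sum>k\<in>F. c k * jderivs {a..b} n (g k) x"])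
     (auto intro!: derivative_eq_intros smooth_on_J_has_derivative[OF u] simp: mult.commute)

text \<open>In the Leibniz and Faa di Bruno formulas below, a word \<open>t\<close> of length \<open>n\<close> over \<open>bool\<close>
  records, for each of the \<open>n\<close> differentiations, which factor it hits; this avoids binomial
  coefficients, and there are \<open>2 ^ n\<close> terms.\<close>

lemma sum_bool_lists_Suc:
  "(\<Sum>t\<in>{t::bool list. length t = Suc n}. F t) = (\<Sum>t\<in>{t. length t = n}. F (True # t) + F (False # t))"
proof -
  have split: "{t::bool list. length t = Suc n} =
      (\<lambda>t. True # t) ` {t. length t = n} \<union> (\<lambda>t. False # t) ` {t. length t = n}"
    by (auto simp: length_Suc_conv)
  have "(\<Sum>t\<in>{t::bool list. length t = Suc n}. F t) =
     (\<Sum>t\<in>(\<lambda>t. True # t) ` {t. length t = n}. F t) + (\<Sum>t\<in>(\<lambda>t. False # t) ` {t. length t = n}. F t)"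
    unfolding split by (rule sum.union_disjoint) (auto simp: finite_list_length)
  also have "\<dots> = (\<Sum>t\<in>{t. length t = n}. F (True # t)) + (\<Sum>t\<in>{t. length t = n}. F (False # t))"
    by (subst sum.reindex, simp add: inj_on_def)+ (simp add: o_def)
  finally show ?thesis by (simp add: sum.distrib)
qed

lemma card_bool_lists: "card {t::bool list. length t = n} = 2 ^ n"
  using card_lists_length_eq[of "UNIV :: bool set" n] by simp

definition leibniz_sum :: "real set \<Rightarrow> (real \<Rightarrow> real) \<Rightarrow> (real \<Rightarrow> real) \<Rightarrow> nat \<Rightarrow> real \<Rightarrow> real" where
  "leibniz_sum J u v n x = (\<Sum>t\<in>{t::bool list. length t = n}.
      jderivs J (count_list t True) u x * jderivs J (count_list t False) v x)"

lemma jderivs_mult: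
  assumes ab: "(a::real) < b" and u: "smooth_on_J {a..b} u" and v: "smooth_on_J {a..b} v"
  shows "smooth_on_J {a..b} (\<lambda>x. u x * v x) \<and>
    (\<forall>n. \<forall>x\<in>{a..b}. jderivs {a..b} n (\<lambda>x. u x * v x) x = leibniz_sum {a..b} u v n x)"
proof (rule smooth_on_J_by_derivs[OF ab])
  fix n x assume x: "x \<in> {a..b}"
  have "(leibniz_sum {a..b} u v n has_real_derivative
      (\<Sum>t\<in>{t::bool list. length t = n}.
         jderivs {a..b} (Suc (count_list t True)) u x * jderivs {a..b} (count_list t False) v x
       + jderivs {a..b} (count_list t True) u x * jderivs {a..b} (Suc (count_list t False)) v x))
     (at x within {a..b})"
    unfolding leibniz_sum_def
    by (intro DERIV_sum)
       (auto intro!: derivative_eq_intros smooth_on_J_has_derivative[OF u x]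
         smooth_on_J_has_derivative[OF v x] simp: mult.commute)
  then show "(leibniz_sum {a..b} u v n has_real_derivative leibniz_sum {a..b} u v (Suc n) x)
      (at x within {a..b})"
    unfolding leibniz_sum_def sum_bool_lists_Suc by simp
qed (simp add: leibniz_sum_def)

fun chain_factor :: "real set \<Rightarrow> (real \<Rightarrow> real) \<Rightarrow> bool list \<Rightarrow> real \<Rightarrow> real" where
  "chain_factor K \<phi> [] = (\<lambda>x. 1)"
| "chain_factor K \<phi> (False # t) = jderiv K (chain_factor K \<phi> t)"
| "chain_factor K \<phi> (True # t) = (\<lambda>x. chain_factor K \<phi> t x * jderiv K \<phi> x)"

lemma smooth_on_J_chain_factor:
  assumes ab: "(a::real) < b" and \<phi>: "smooth_on_J {a..b} \<phi>"
  shows "smooth_on_J {a..b} (chain_factor {a..b} \<phi> t)"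
proof (induction t)
  case Nil
  then show ?case using smooth_on_J_const[OF ab] by simp
next
  case (Cons x t)
  then show ?case
    using jderivs_mult[OF ab Cons.IH smooth_on_J_jderiv[OF \<phi>]] smooth_on_J_jderiv[OF Cons.IH]
    by (cases x) auto
qed

definition faa_di_bruno_sum ::
  "real set \<Rightarrow> real set \<Rightarrow> (real \<Rightarrow> real) \<Rightarrow> (real \<Rightarrow> real) \<Rightarrow> nat \<Rightarrow> real \<Rightarrow> real" where
  "faa_di_bruno_sum K J \<phi> g n x = (\<Sum>t\<in>{t::bool list. length t = n}.
      chain_factor K \<phi> t x * jderivs J (count_list t True) g (\<phi> x))"

lemma jderivs_comp:
  assumes ab: "(a::real) < b" and ab': "(a'::real) < b'" and \<phi>: "smooth_on_J {a'..b'} \<phi>"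
    and img: "\<phi> ` {a'..b'} \<subseteq> {a..b}" and g: "smooth_on_J {a..b} g"
  shows "smooth_on_J {a'..b'} (\<lambda>x. g (\<phi> x)) \<and>
    (\<forall>n. \<forall>x\<in>{a'..b'}. jderivs {a'..b'} n (\<lambda>x. g (\<phi> x)) x = faa_di_bruno_sum {a'..b'} {a..b} \<phi> g n x)"
proof (rule smooth_on_J_by_derivs[OF ab'])
  fix n x assume x: "x \<in> {a'..b'}"
  have d\<phi>: "(\<phi> has_real_derivative jderiv {a'..b'} \<phi> x) (at x within {a'..b'})"
    using smooth_on_J_has_derivative[OF \<phi> x, of 0] by (simp add: jderivs_Suc)
  have dg: "((\<lambda>y. jderivs {a..b} m g (\<phi> y)) has_real_derivative
       jderivs {a..b} (Suc m) g (\<phi> x) * jderiv {a'..b'} \<phi> x) (at x within {a'..b'})" for m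
  proof -
    have "(jderivs {a..b} m g has_real_derivative jderivs {a..b} (Suc m) g (\<phi> x))
        (at (\<phi> x) within \<phi> ` {a'..b'})"
      using has_field_derivative_subset[OF smooth_on_J_has_derivative[OF g] img] img x by blast
    from DERIV_image_chain[OF this d\<phi>] show ?thesis by (simp add: o_def)
  qed
  have dQ: "(chain_factor {a'..b'} \<phi> t has_real_derivative chain_factor {a'..b'} \<phi> (False # t) x)
      (at x within {a'..b'})" for t
    using smooth_on_J_has_derivative[OF smooth_on_J_chain_factor[OF ab' \<phi>, of t] x, of 0]
    by (simp add: jderivs_Suc)
  have "(faa_di_bruno_sum {a'..b'} {a..b} \<phi> g n has_real_derivative
      (\<Sum>t\<in>{t::bool list. length t = n}.
         chain_factor {a'..b'} \<phi> (False # t) x * jderivs {a..b} (count_list t True) g (\<phi> x)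
       + chain_factor {a'..b'} \<phi> t x * (jderivs {a..b} (Suc (count_list t True)) g (\<phi> x) * jderiv {a'..b'} \<phi> x)))
     (at x within {a'..b'})"
    unfolding faa_di_bruno_sum_def
    by (intro DERIV_sum) (use DERIV_mult[OF dQ dg] in \<open>simp add: algebra_simps\<close>)
  then show "(faa_di_bruno_sum {a'..b'} {a..b} \<phi> g n has_real_derivative
      faa_di_bruno_sum {a'..b'} {a..b} \<phi> g (Suc n) x) (at x within {a'..b'})"
    unfolding faa_di_bruno_sum_def sum_bool_lists_Suc by (simp add: algebra_simps)
qed (simp add: faa_di_bruno_sum_def)

section \<open>Sup norms and \<open>C\<^sup>r\<close> norms\<close>

lemma abs_le_SUP_abs:
  fixes v :: "real \<Rightarrow> real"
  assumes "continuous_on {a..b} v" "x \<in> {a..b}"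
  shows "\<bar>v x\<bar> \<le> Sup ((\<lambda>x. \<bar>v x\<bar>) ` {a..b})"
proof (rule cSUP_upper[OF assms(2)])
  have "compact ((\<lambda>x. \<bar>v x\<bar>) ` {a..b})"
    by (intro compact_continuous_image continuous_intros assms) auto
  then show "bdd_above ((\<lambda>x. \<bar>v x\<bar>) ` {a..b})"
    by (simp add: bounded_imp_bdd_above compact_imp_bounded)
qed

lemma SUP_abs_nonneg:
  fixes v :: "real \<Rightarrow> real"
  assumes "continuous_on {a..b} v" "(a::real) \<le> b"
  shows "0 \<le> Sup ((\<lambda>x. \<bar>v x\<bar>) ` {a..b})"
  using abs_le_SUP_abs[OF assms(1), of a] assms(2) by (meson abs_ge_zero atLeastAtMost_iff order.trans order_refl)

lemma cr_norm_nonneg: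
  assumes "smooth_on_J {a..b} u" "(a::real) \<le> b"
  shows "0 \<le> cr_norm {a..b} r u"
  unfolding cr_norm_def by (intro sum_nonneg SUP_abs_nonneg continuous_on_jderivs assms)

lemma abs_jderivs_le_cr_norm:
  assumes "smooth_on_J {a..b} u" "i \<le> r" "x \<in> {a..b::real}"
  shows "\<bar>jderivs {a..b} i u x\<bar> \<le> cr_norm {a..b} r u"
proof -
  have "\<bar>jderivs {a..b} i u x\<bar> \<le> Sup ((\<lambda>x. \<bar>jderivs {a..b} i u x\<bar>) ` {a..b})"
    by (intro abs_le_SUP_abs continuous_on_jderivs assms)
  also have "\<dots> = (\<Sum>j\<in>{i}. Sup ((\<lambda>x. \<bar>jderivs {a..b} j u x\<bar>) ` {a..b}))" by simp
  also have "\<dots> \<le> cr_norm {a..b} r u"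
    unfolding cr_norm_def using assms
    by (intro sum_mono2) (auto intro!: SUP_abs_nonneg continuous_on_jderivs)
  finally show ?thesis .
qed

lemma cr_norm_le:
  assumes "(a::real) \<le> b" "\<And>i x. i \<le> r \<Longrightarrow> x \<in> {a..b} \<Longrightarrow> \<bar>jderivs {a..b} i u x\<bar> \<le> M"
  shows "cr_norm {a..b} r u \<le> (real r + 1) * M"
proof -
  have "cr_norm {a..b} r u \<le> (\<Sum>i\<le>r. M)"
    unfolding cr_norm_def by (intro sum_mono cSUP_least) (use assms in auto)
  then show ?thesis by (simp add: algebra_simps)
qed

lemma cr_norm_jderivs:
  assumes "smooth_on_J {a..b} u" "(a::real) \<le> b"
  shows "cr_norm {a..b} s (jderivs {a..b} r u) \<le> cr_norm {a..b} (s + r) u"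
proof -
  have "cr_norm {a..b} s (jderivs {a..b} r u) =
      (\<Sum>i\<in>(\<lambda>i. i + r) ` {..s}. Sup ((\<lambda>x. \<bar>jderivs {a..b} i u x\<bar>) ` {a..b}))"
    unfolding cr_norm_def jderivs_jderivs by (subst sum.reindex) (auto simp: o_def)
  also have "\<dots> \<le> cr_norm {a..b} (s + r) u"
    unfolding cr_norm_def using assms
    by (intro sum_mono2) (auto intro!: SUP_abs_nonneg continuous_on_jderivs)
  finally show ?thesis .
qed

lemma cr_norm_mult:
  assumes ab: "(a::real) < b" and u: "smooth_on_J {a..b} u" and v: "smooth_on_J {a..b} v"
  shows "cr_norm {a..b} r (\<lambda>x. u x * v x) \<le> (real r + 1) * 2 ^ r * cr_norm {a..b} r u * cr_norm {a..b} r v"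
proof -
  have nu: "0 \<le> cr_norm {a..b} r u" and nv: "0 \<le> cr_norm {a..b} r v"
    using cr_norm_nonneg u v ab by auto
  have "\<bar>jderivs {a..b} i (\<lambda>x. u x * v x) x\<bar> \<le> 2 ^ r * cr_norm {a..b} r u * cr_norm {a..b} r v"
    if i: "i \<le> r" and x: "x \<in> {a..b}" for i x
  proof -
    have "\<bar>jderivs {a..b} i (\<lambda>x. u x * v x) x\<bar> = \<bar>leibniz_sum {a..b} u v i x\<bar>"
      using jderivs_mult[OF ab u v] x by simp
    also have "\<dots> \<le> (\<Sum>t\<in>{t::bool list. length t = i}. cr_norm {a..b} r u * cr_norm {a..b} r v)"
      unfolding leibniz_sum_def
    proof (rule order.trans[OF sum_abs], rule sum_mono)
      fix t :: "bool list" assume t: "t \<in> {t. length t = i}"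
      have "count_list t True \<le> r" "count_list t False \<le> r"
        using count_le_length[of t] t i by (auto intro: order.trans)
      then show "\<bar>jderivs {a..b} (count_list t True) u x * jderivs {a..b} (count_list t False) v x\<bar>
          \<le> cr_norm {a..b} r u * cr_norm {a..b} r v"
        unfolding abs_mult using x nu by (intro mult_mono abs_jderivs_le_cr_norm u v) auto
    qed
    also have "\<dots> = 2 ^ i * (cr_norm {a..b} r u * cr_norm {a..b} r v)"
      by (simp add: card_bool_lists)
    also have "\<dots> \<le> 2 ^ r * cr_norm {a..b} r u * cr_norm {a..b} r v"
      using i nu nv by (simp add: mult.assoc mult_right_mono)
    finally show ?thesis .
  qed
  then show ?thesis using cr_norm_le[of a b r] ab by (simp add: mult.assoc)
qed

lemma cr_norm_comp_le:
  assumes ab: "(a::real) < b" and ab': "(a'::real) < b'" and \<phi>: "smooth_on_J {a'..b'} \<phi>"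
    and img: "\<phi> ` {a'..b'} \<subseteq> {a..b}"
  obtains A where "A \<ge> 0"
    "\<And>g. smooth_on_J {a..b} g \<Longrightarrow> cr_norm {a'..b'} r (\<lambda>x. g (\<phi> x)) \<le> A * cr_norm {a..b} r g"
proof -
  define S where "S t = Sup ((\<lambda>x. \<bar>chain_factor {a'..b'} \<phi> t x\<bar>) ` {a'..b'})" for t
  have cont: "continuous_on {a'..b'} (chain_factor {a'..b'} \<phi> t)" for t
    by (rule smooth_on_J_imp_continuous_on[OF smooth_on_J_chain_factor[OF ab' \<phi>]])
  have S0: "S t \<ge> 0" for t
    unfolding S_def by (rule SUP_abs_nonneg[OF cont]) (use ab' in simp)
  define B where "B = (\<Sum>i\<le>r. \<Sum>t\<in>{t::bool list. length t = i}. S t)"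
  have B0: "B \<ge> 0" unfolding B_def using S0 by (intro sum_nonneg) auto
  have main: "cr_norm {a'..b'} r (\<lambda>x. g (\<phi> x)) \<le> ((real r + 1) * B) * cr_norm {a..b} r g"
    if g: "smooth_on_J {a..b} g" for g
  proof -
    have N0: "0 \<le> cr_norm {a..b} r g" using cr_norm_nonneg[OF g] ab by simp
    have "\<bar>jderivs {a'..b'} i (\<lambda>x. g (\<phi> x)) x\<bar> \<le> B * cr_norm {a..b} r g"
      if i: "i \<le> r" and x: "x \<in> {a'..b'}" for i x
    proof -
      have \<phi>x: "\<phi> x \<in> {a..b}" using img x by blast
      have "\<bar>jderivs {a'..b'} i (\<lambda>x. g (\<phi> x)) x\<bar> = \<bar>faa_di_bruno_sum {a'..b'} {a..b} \<phi> g i x\<bar>"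
        using jderivs_comp[OF ab ab' \<phi> img g] x by simp
      also have "\<dots> \<le> (\<Sum>t\<in>{t::bool list. length t = i}. S t * cr_norm {a..b} r g)"
        unfolding faa_di_bruno_sum_def
      proof (rule order.trans[OF sum_abs], rule sum_mono)
        fix t :: "bool list" assume t: "t \<in> {t. length t = i}"
        have "count_list t True \<le> r" using order.trans[OF count_le_length[of t True]] t i by auto
        then show "\<bar>chain_factor {a'..b'} \<phi> t x * jderivs {a..b} (count_list t True) g (\<phi> x)\<bar>
            \<le> S t * cr_norm {a..b} r g"
          unfolding abs_mult S_def using abs_le_SUP_abs[OF cont x] abs_jderivs_le_cr_norm[OF g _ \<phi>x] S0
          by (intro mult_mono) (auto simp: S_def)
      qed
      also have "\<dots> = (\<Sum>t\<in>{t::bool list. length t = i}. S t) * cr_norm {a..b} r g"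
        by (simp add: sum_distrib_right)
      also have "\<dots> \<le> B * cr_norm {a..b} r g"
        unfolding B_def using i S0
        by (intro mult_right_mono[OF _ N0] member_le_sum[of i "{..r}" "\<lambda>i. \<Sum>t\<in>{t::bool list. length t = i}. S t"])
           (auto intro: sum_nonneg)
      finally show ?thesis .
    qed
    then show ?thesis using cr_norm_le[of a' b' r] ab' by (simp add: mult.assoc)
  qed
  show ?thesis
    by (rule that[OF _ main]) (use B0 in simp)
qed

lemma jsupp_subset: "jsupp {a..b::real} u \<subseteq> {a..b}"
  unfolding jsupp_def by (intro closure_minimal) auto

lemma compact_jsupp: "compact (jsupp {a..b::real} u)"
  unfolding compact_eq_bounded_closed jsupp_def
  using bounded_subset[OF compact_imp_bounded[OF compact_Icc] jsupp_subset[unfolded jsupp_def]]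
  by blast

lemma not_in_jsupp_imp_zero: "x \<in> J \<Longrightarrow> x \<notin> jsupp J u \<Longrightarrow> u x = 0"
  using closure_subset[of "{x\<in>J. u x \<noteq> 0}"] unfolding jsupp_def by auto

lemma jsupp_mono: "(\<And>x. x \<in> J \<Longrightarrow> u x \<noteq> 0 \<Longrightarrow> v x \<noteq> 0) \<Longrightarrow> jsupp J u \<subseteq> jsupp J v"
  unfolding jsupp_def by (rule closure_mono) auto

lemma jsupp_add: "jsupp J (\<lambda>x. u x + v x) \<subseteq> jsupp J u \<union> jsupp J v"
  unfolding jsupp_def closure_Un[symmetric] by (rule closure_mono) auto

lemma jsupp_jderiv:
  assumes ab: "(a::real) < b"
  shows "jsupp {a..b} (jderiv {a..b} u) \<subseteq> jsupp {a..b} u"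
proof -
  have "jderiv {a..b} u x = 0" if x: "x \<in> {a..b}" and nx: "x \<notin> jsupp {a..b} u" for x
  proof -
    have "open (- jsupp {a..b} u)" unfolding jsupp_def by auto
    then obtain e where e: "e > 0" "ball x e \<subseteq> - jsupp {a..b} u"
      using nx open_contains_ball by blast
    have "(u has_real_derivative 0) (at x within {a..b})"
    proof (rule has_field_derivative_transform_within[OF _ e(1) x])
      show "((\<lambda>_. 0) has_real_derivative 0) (at x within {a..b})" by simp
      fix y assume y: "y \<in> {a..b}" "dist y x < e"
      then have "y \<notin> jsupp {a..b} u" using e(2) by (auto simp: dist_commute)
      then show "0 = u y" using not_in_jsupp_imp_zero y by metis
    qed
    then show ?thesis using jderiv_eqI ab x by blast
  qed
  then have "{x\<in>{a..b}. jderiv {a..b} u x \<noteq> 0} \<subseteq> jsupp {a..b} u" by blast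
  then show ?thesis unfolding jsupp_def[of "{a..b}" "jderiv {a..b} u"]
    by (rule closure_minimal) (simp add: jsupp_def)
qed

lemma jsupp_jderivs:
  assumes "(a::real) < b"
  shows "jsupp {a..b} (jderivs {a..b} r u) \<subseteq> jsupp {a..b} u"
  by (induction r) (auto simp: jderivs_Suc dest!: jsupp_jderiv[OF assms, THEN subsetD])

section \<open>Exponentially growing and super-exponentially decaying sequences\<close>

lemma summable_superexp_conv_mult:
  assumes c: "superexp_conv c 0" and A: "grows_at_most_exp k0 A"
  shows "summable (\<lambda>n. c (k0 + int n) * A (k0 + int n))"
proof -
  obtain \<gamma> B where B: "\<And>k. k \<ge> k0 \<Longrightarrow> \<bar>2 powr (real_of_int k * \<gamma>) * A k\<bar> \<le> B"
    using A unfolding grows_at_most_exp_def by blast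
  have "((\<lambda>k. 2 powr (real_of_int k * (1 - \<gamma>)) * (c k - 0)) \<longlongrightarrow> 0) at_top"
    using c unfolding superexp_conv_def by blast
  from tendstoD[OF this zero_less_one]
  obtain K where K: "\<And>k. k \<ge> K \<Longrightarrow> \<bar>2 powr (real_of_int k * (1 - \<gamma>)) * c k\<bar> < 1"
    unfolding eventually_at_top_linorder dist_real_def by auto
  show ?thesis
  proof (rule summable_comparison_test')
    show "summable (\<lambda>n. B * (2 powr (- real_of_int k0) * (1 / 2) ^ n))"
      by (intro summable_mult summable_geometric) simp
  next
    fix n :: nat assume n: "n \<ge> nat (K - k0)"
    define k where "k = k0 + int n"
    have k: "k \<ge> K" "k \<ge> k0" using n by (auto simp: k_def)
    have "2 powr (real_of_int k * (1 - \<gamma>)) * 2 powr (real_of_int k * \<gamma>) * 2 powr (- real_of_int k) = (1::real)"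
      by (simp add: algebra_simps flip: powr_add)
    then have "c k * A k = (2 powr (real_of_int k * (1 - \<gamma>)) * c k) * (2 powr (real_of_int k * \<gamma>) * A k)
        * 2 powr (- real_of_int k)"
      by (metis (no_types, lifting) mult.commute mult.left_commute mult_1)
    then have "norm (c k * A k) = \<bar>2 powr (real_of_int k * (1 - \<gamma>)) * c k\<bar>
        * \<bar>2 powr (real_of_int k * \<gamma>) * A k\<bar> * 2 powr (- real_of_int k)"
      by (simp only: real_norm_def abs_mult abs_of_nonneg[OF powr_ge_zero])
    also have "\<dots> \<le> 1 * B * 2 powr (- real_of_int k)"
      using K[OF k(1)] B[OF k(2)] by (intro mult_right_mono mult_mono) auto
    also have "2 powr (- real_of_int k) = 2 powr (- real_of_int k0) * 2 powr (- real n)"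
      by (simp add: k_def flip: powr_add)
    also have "(2::real) powr (- real n) = (1 / 2) ^ n"
      by (simp add: powr_minus powr_realpow power_one_over inverse_eq_divide)
    finally show "norm (c (k0 + int n) * A (k0 + int n)) \<le> B * (2 powr (- real_of_int k0) * (1 / 2) ^ n)"
      by (simp add: k_def)
  qed
qed

lemma grows_at_most_exp_dominated:
  assumes A: "grows_at_most_exp k0 A" and K: "K \<ge> 0"
    and nonneg: "\<And>k. k \<ge> k0 \<Longrightarrow> 0 \<le> A' k" and le: "\<And>k. k > k0 \<Longrightarrow> A' k \<le> K * A k"
  shows "grows_at_most_exp k0 A'"
proof -
  obtain \<gamma> B where B: "\<And>k. k \<ge> k0 \<Longrightarrow> \<bar>2 powr (real_of_int k * \<gamma>) * A k\<bar> \<le> B"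
    using A unfolding grows_at_most_exp_def by blast
  have "\<bar>2 powr (real_of_int k * \<gamma>) * A' k\<bar> \<le> max (K * B) \<bar>2 powr (real_of_int k0 * \<gamma>) * A' k0\<bar>"
    if k: "k \<ge> k0" for k
  proof (cases "k = k0")
    case False
    then have "\<bar>2 powr (real_of_int k * \<gamma>) * A' k\<bar> \<le> 2 powr (real_of_int k * \<gamma>) * (K * A k)"
      using nonneg[OF k] le[of k] k by (simp add: abs_mult)
    also have "\<dots> \<le> K * \<bar>2 powr (real_of_int k * \<gamma>) * A k\<bar>"
      using K by (simp add: abs_mult mult_left_mono)
    also have "\<dots> \<le> K * B" using B[OF k] K by (rule mult_left_mono)
    finally show ?thesis by simp
  qed simp
  then show ?thesis unfolding grows_at_most_exp_def by blast
qed

lemma grows_at_most_exp_shift: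
  assumes "grows_at_most_exp k0 A"
  shows "grows_at_most_exp (k0 + m) (\<lambda>k. A (k - m))"
proof -
  obtain \<gamma> B where B: "\<And>k. k \<ge> k0 \<Longrightarrow> \<bar>2 powr (real_of_int k * \<gamma>) * A k\<bar> \<le> B"
    using assms unfolding grows_at_most_exp_def by blast
  have "\<bar>2 powr (real_of_int k * \<gamma>) * A (k - m)\<bar> \<le> 2 powr (real_of_int m * \<gamma>) * B"
    if "k \<ge> k0 + m" for k
  proof -
    have "\<bar>2 powr (real_of_int k * \<gamma>) * A (k - m)\<bar> =
        2 powr (real_of_int m * \<gamma>) * \<bar>2 powr (real_of_int (k - m) * \<gamma>) * A (k - m)\<bar>"
      by (simp add: abs_mult algebra_simps flip: powr_add)
    also have "\<dots> \<le> 2 powr (real_of_int m * \<gamma>) * B"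
      using B[of "k - m"] that by (intro mult_left_mono) auto
    finally show ?thesis .
  qed
  then show ?thesis unfolding grows_at_most_exp_def by blast
qed

lemma superexp_conv_shift:
  assumes "superexp_conv a l"
  shows "superexp_conv (\<lambda>k. a (k - m)) l"
  unfolding superexp_conv_def
proof
  fix \<gamma> :: real
  have shift: "filterlim (\<lambda>k::int. k - m) at_top at_top"
    by (simp add: filterlim_at_top eventually_at_top_linorder) (metis add.commute le_diff_eq)
  have "((\<lambda>k. 2 powr (real_of_int k * \<gamma>) * (a k - l)) \<longlongrightarrow> 0) at_top"
    using assms unfolding superexp_conv_def by blast
  from tendsto_mult_right_zero[OF filterlim_compose[OF this shift], of "2 powr (real_of_int m * \<gamma>)"]
  show "((\<lambda>k. 2 powr (real_of_int k * \<gamma>) * (a (k - m) - l)) \<longlongrightarrow> 0) at_top"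
    by (simp add: algebra_simps flip: powr_add)
qed

section \<open>Pliable series\<close>

definition pliable_series_i_ii ::
  "real \<Rightarrow> real \<Rightarrow> real \<Rightarrow> int \<Rightarrow> (int \<Rightarrow> real) \<Rightarrow> (int \<Rightarrow> real \<Rightarrow> real) \<Rightarrow> bool" where
  "pliable_series_i_ii a b c k0 cs gs \<longleftrightarrow>
     (\<forall>k\<ge>k0. cs k > 0) \<and> superexp_conv cs 0 \<and>
     (\<forall>k\<ge>k0. smooth_on_J {a..b} (gs k) \<and> compact (jsupp {a..b} (gs k)) \<and>
                jsupp {a..b} (gs k) \<subseteq> {a..b} - {c}) \<and>
     (\<forall>x\<in>{a..b} - {c}. \<exists>e>0. finite {k. k \<ge> k0 \<and> jsupp {a..b} (gs k) \<inter> ball x e \<noteq> {}}) \<and>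
     (\<forall>r. grows_at_most_exp k0 (\<lambda>k. cr_norm {a..b} r (gs k)))"

definition annulus_indices :: "real \<Rightarrow> real \<Rightarrow> real \<Rightarrow> int \<Rightarrow> (int \<Rightarrow> real \<Rightarrow> real) \<Rightarrow> real \<Rightarrow> int set" where
  "annulus_indices a b c k0 gs \<epsilon> = {k. k \<ge> k0 \<and>
      jsupp {a..b} (gs k) \<inter> {x\<in>{a..b}. \<epsilon> \<le> \<bar>x - c\<bar> \<and> \<bar>x - c\<bar> \<le> 2 * \<epsilon>} \<noteq> {}}"

text \<open>Condition (iii) with its two roles of \<open>L\<close> separated, a constant \<open>C\<close>, and only at scales
  \<open>\<epsilon> < \<epsilon>0\<close>. Condition (iii) is the case \<open>\<epsilon>0 = b - a\<close>, \<open>N = L\<close>, \<open>C = 1\<close>; an index shift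
  reduces the general case to it.\<close>
definition annulus_bound ::
  "real \<Rightarrow> real \<Rightarrow> real \<Rightarrow> int \<Rightarrow> (int \<Rightarrow> real \<Rightarrow> real) \<Rightarrow> real \<Rightarrow> real \<Rightarrow> real \<Rightarrow> real \<Rightarrow> bool" where
  "annulus_bound a b c k0 gs \<epsilon>0 N L C \<longleftrightarrow>
     (\<forall>\<epsilon>. 0 < \<epsilon> \<and> \<epsilon> < \<epsilon>0 \<and> 2 * \<epsilon> < b - a \<longrightarrow>
        finite (annulus_indices a b c k0 gs \<epsilon>) \<and> real (card (annulus_indices a b c k0 gs \<epsilon>)) \<le> N \<and>
        (\<forall>k\<in>annulus_indices a b c k0 gs \<epsilon>. 2 powr (- (real_of_int k * L)) \<le> C * \<epsilon>))"

lemma pliable_series_iff: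
  "pliable_series a b c k0 cs gs \<longleftrightarrow>
     pliable_series_i_ii a b c k0 cs gs \<and> (\<exists>L>0. annulus_bound a b c k0 gs (b - a) L L 1)"
proof -
  have scale: "(0 < 2 * \<epsilon> \<and> 2 * \<epsilon> < b - a) \<longleftrightarrow> (0 < \<epsilon> \<and> \<epsilon> < b - a \<and> 2 * \<epsilon> < b - a)"
    for \<epsilon> :: real by auto
  show ?thesis
    unfolding pliable_series_def pliable_series_i_ii_def annulus_bound_def annulus_indices_def
      Let_def scale by auto
qed

lemma pliable_series_i_ii_D:
  assumes "pliable_series_i_ii a b c k0 cs gs" "k \<ge> k0"
  shows "cs k > 0" "smooth_on_J {a..b} (gs k)" "jsupp {a..b} (gs k) \<subseteq> {a..b} - {c}"
  using assms unfolding pliable_series_i_ii_def by auto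

lemma pliable_series_i_ii_superexp_grows:
  assumes "pliable_series_i_ii a b c k0 cs gs"
  shows "superexp_conv cs 0" "grows_at_most_exp k0 (\<lambda>k. cr_norm {a..b} r (gs k))"
  using assms unfolding pliable_series_i_ii_def by auto

lemma pliable_series_i_ii_locally_finite:
  assumes "pliable_series_i_ii a b c k0 cs gs" "x \<in> {a..b} - {c}"
  obtains e where "e > 0" "finite {k. k \<ge> k0 \<and> jsupp {a..b} (gs k) \<inter> ball x e \<noteq> {}}"
  using assms unfolding pliable_series_i_ii_def by blast

lemma annulus_bound_supp_subset:
  assumes bound: "annulus_bound a b c k0 gs \<epsilon>0 N L C"
    and supp: "\<And>k. k \<ge> k0 \<Longrightarrow> jsupp {a..b} (gs' k) \<inter> cball c \<delta> \<subseteq> jsupp {a..b} (gs k)"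
  shows "annulus_bound a b c k0 gs' (min \<epsilon>0 (\<delta> / 2)) N L C"
  unfolding annulus_bound_def
proof (intro allI impI)
  fix \<epsilon> :: real assume \<epsilon>: "0 < \<epsilon> \<and> \<epsilon> < min \<epsilon>0 (\<delta> / 2) \<and> 2 * \<epsilon> < b - a"
  have sub: "annulus_indices a b c k0 gs' \<epsilon> \<subseteq> annulus_indices a b c k0 gs \<epsilon>"
  proof
    fix k assume "k \<in> annulus_indices a b c k0 gs' \<epsilon>"
    then obtain y where y: "k \<ge> k0" "y \<in> jsupp {a..b} (gs' k)" "y \<in> {a..b}"
        "\<epsilon> \<le> \<bar>y - c\<bar>" "\<bar>y - c\<bar> \<le> 2 * \<epsilon>"
      unfolding annulus_indices_def by blast
    have "y \<in> cball c \<delta>" using y(5) \<epsilon> by (simp add: dist_real_def abs_minus_commute)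
    then show "k \<in> annulus_indices a b c k0 gs \<epsilon>"
      using supp[OF y(1)] y unfolding annulus_indices_def by blast
  qed
  have fin: "finite (annulus_indices a b c k0 gs \<epsilon>)"
    and card: "real (card (annulus_indices a b c k0 gs \<epsilon>)) \<le> N"
    and exp: "\<forall>k\<in>annulus_indices a b c k0 gs \<epsilon>. 2 powr (- (real_of_int k * L)) \<le> C * \<epsilon>"
    using bound \<epsilon> unfolding annulus_bound_def by auto
  show "finite (annulus_indices a b c k0 gs' \<epsilon>) \<and> real (card (annulus_indices a b c k0 gs' \<epsilon>)) \<le> N \<and>
      (\<forall>k\<in>annulus_indices a b c k0 gs' \<epsilon>. 2 powr (- (real_of_int k * L)) \<le> C * \<epsilon>)"
    using finite_subset[OF sub fin] card_mono[OF fin sub] card exp sub by force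
qed

subsection \<open>Convergence of the differentiated series\<close>

lemma has_sum_atLeast_int_iff:
  fixes F :: "int \<Rightarrow> 'a::{comm_monoid_add,topological_space}"
  shows "(F has_sum s) {k0..} \<longleftrightarrow> ((\<lambda>n. F (k0 + int n)) has_sum s) UNIV"
proof -
  have "bij_betw (\<lambda>n::nat. k0 + int n) UNIV {k0..}"
    unfolding bij_betw_def inj_on_def by (auto simp: image_def intro!: exI[of _ "nat (_ - k0)"])
  from has_sum_reindex_bij_betw[OF this, of F s] show ?thesis by (simp add: o_def)
qed

lemma sum_atLeastAtMost_int_eq_lessThan_nat:
  "(\<Sum>k\<in>{k0..l}. F k) = (\<Sum>n<nat (l - k0 + 1). F (k0 + int n))"
proof -
  have img: "{k0..l} = (\<lambda>n. k0 + int n) ` {..<nat (l - k0 + 1)}"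
  proof (intro set_eqI iffI)
    fix k assume "k \<in> {k0..l}"
    then show "k \<in> (\<lambda>n. k0 + int n) ` {..<nat (l - k0 + 1)}"
      by (intro image_eqI[of _ _ "nat (k - k0)"]) auto
  qed auto
  show ?thesis
    unfolding img by (subst sum.reindex) (auto simp: inj_on_def)
qed

lemma summable_coeff_cr_norm:
  assumes "pliable_series_i_ii a b c k0 cs gs"
  shows "summable (\<lambda>n. cs (k0 + int n) * cr_norm {a..b} r (gs (k0 + int n)))"
  using summable_superexp_conv_mult pliable_series_i_ii_superexp_grows[OF assms] by blast

lemma norm_coeff_jderivs_le:
  assumes ser: "pliable_series_i_ii a b c k0 cs gs" and x: "x \<in> {a..b}"
  shows "norm (cs (k0 + int n) * jderivs {a..b} i (gs (k0 + int n)) x)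
      \<le> cs (k0 + int n) * cr_norm {a..b} i (gs (k0 + int n))"
  using pliable_series_i_ii_D(1,2)[OF ser, of "k0 + int n"]
    abs_jderivs_le_cr_norm[OF _ order_refl x, of "gs (k0 + int n)" i]
  by (simp add: abs_mult mult_left_mono)

lemma uniform_limit_jderivs_series:
  assumes "pliable_series_i_ii a b c k0 cs gs"
  shows "uniform_limit {a..b} (\<lambda>N x. \<Sum>n<N. cs (k0 + int n) * jderivs {a..b} i (gs (k0 + int n)) x)
      (\<lambda>x. \<Sum>n. cs (k0 + int n) * jderivs {a..b} i (gs (k0 + int n)) x) sequentially"
  by (rule Weierstrass_m_test[OF norm_coeff_jderivs_le[OF assms] summable_coeff_cr_norm[OF assms]])

lemma jderivs_series_sums:
  assumes ab: "a < b" and ser: "pliable_series_i_ii a b c k0 cs gs"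
    and fsum: "\<forall>x\<in>{a..b}. ((\<lambda>k. cs k * gs k x) has_sum f x) {k0..}"
  shows "\<forall>x\<in>{a..b}. (\<lambda>n. cs (k0 + int n) * jderivs {a..b} i (gs (k0 + int n)) x) sums jderivs {a..b} i f x"
proof (induction i)
  case 0
  show ?case
    using fsum by (simp add: has_sum_atLeast_int_iff has_sum_imp_sums)
next
  case (Suc i)
  define T where "T j n x = cs (k0 + int n) * jderivs {a..b} j (gs (k0 + int n)) x" for j n x
  have sums_suminf: "(\<lambda>n. T j n x) sums (\<Sum>n. T j n x)" if "x \<in> {a..b}" for j x
    unfolding sums_def T_def using tendsto_uniform_limitI[OF uniform_limit_jderivs_series[OF ser] that] .
  have "\<exists>g. \<forall>x\<in>{a..b}. (\<lambda>n. T i n x) sums g x \<and>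
      (g has_field_derivative (\<Sum>n. T (Suc i) n x)) (at x within {a..b})"
  proof (rule has_field_derivative_series)
    show "((\<lambda>x. T i n x) has_field_derivative T (Suc i) n x) (at x within {a..b})" if "x \<in> {a..b}" for n x
      unfolding T_def using pliable_series_i_ii_D(2)[OF ser]
      by (intro DERIV_cmult smooth_on_J_has_derivative that) simp
    show "uniform_limit {a..b} (\<lambda>n x. \<Sum>j<n. T (Suc i) j x) (\<lambda>x. \<Sum>n. T (Suc i) n x) sequentially"
      unfolding T_def by (rule uniform_limit_jderivs_series[OF ser])
    show "summable (\<lambda>n. T i n a)" using Suc.IH ab by (auto simp: T_def sums_iff)
  qed (use ab in auto)
  then obtain g where g: "\<And>x. x \<in> {a..b} \<Longrightarrow> (\<lambda>n. T i n x) sums g x"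
      "\<And>x. x \<in> {a..b} \<Longrightarrow> (g has_field_derivative (\<Sum>n. T (Suc i) n x)) (at x within {a..b})"
    by blast
  have "g x = jderivs {a..b} i f x" if "x \<in> {a..b}" for x
    using g(1)[OF that] Suc.IH that sums_unique2 by (fastforce simp: T_def)
  then have "(jderivs {a..b} i f has_field_derivative (\<Sum>n. T (Suc i) n x)) (at x within {a..b})"
    if "x \<in> {a..b}" for x
    by (rule has_field_derivative_transform_within[OF g(2)[OF that] zero_less_one that]) auto
  then have "jderivs {a..b} (Suc i) f x = (\<Sum>n. T (Suc i) n x)" if "x \<in> {a..b}" for x
    unfolding jderivs_Suc using jderiv_eqI[OF ab that] that by blast
  then show ?case using sums_suminf by (simp add: T_def)
qed

lemma jderivs_series_has_sum:
  assumes ab: "a < b" and ser: "pliable_series_i_ii a b c k0 cs gs"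
    and fsum: "\<forall>x\<in>{a..b}. ((\<lambda>k. cs k * gs k x) has_sum f x) {k0..}" and x: "x \<in> {a..b}"
  shows "((\<lambda>k. cs k * jderivs {a..b} i (gs k) x) has_sum jderivs {a..b} i f x) {k0..}"
proof -
  have "summable (\<lambda>n. norm (cs (k0 + int n) * jderivs {a..b} i (gs (k0 + int n)) x))"
    by (rule summable_comparison_test[OF _ summable_coeff_cr_norm[OF ser]])
       (use norm_coeff_jderivs_le[OF ser x] in auto)
  from norm_summable_imp_has_sum[OF this] jderivs_series_sums[OF ab ser fsum] x
  show ?thesis by (simp add: has_sum_atLeast_int_iff)
qed

lemma uniform_limit_jderivs_partial_sums:
  assumes ab: "a < b" and ser: "pliable_series_i_ii a b c k0 cs gs"
    and fsum: "\<forall>x\<in>{a..b}. ((\<lambda>k. cs k * gs k x) has_sum f x) {k0..}"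
  shows "uniform_limit {a..b} (\<lambda>N x. \<Sum>n<N. cs (k0 + int n) * jderivs {a..b} i (gs (k0 + int n)) x)
      (jderivs {a..b} i f) sequentially"
  using uniform_limit_jderivs_series[OF ser]
  by (rule uniform_limit_cong'[THEN iffD1, rotated -1])
     (use jderivs_series_sums[OF ab ser fsum] in \<open>auto simp: sums_iff\<close>)

lemma eventually_jderivs_partial_sums_close:
  assumes ab: "a < b" and ser: "pliable_series_i_ii a b c k0 cs gs"
    and fsum: "\<forall>x\<in>{a..b}. ((\<lambda>k. cs k * gs k x) has_sum f x) {k0..}" and \<delta>: "\<delta> > 0"
  shows "\<forall>\<^sub>F N in sequentially. \<forall>i\<in>{..r}. \<forall>x\<in>{a..b}.
      dist (\<Sum>n<N. cs (k0 + int n) * jderivs {a..b} i (gs (k0 + int n)) x) (jderivs {a..b} i f x) < \<delta>"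
  by (rule eventually_ball_finite)
     (use uniform_limitD[OF uniform_limit_jderivs_partial_sums[OF ab ser fsum] \<delta>] in auto)

lemma cr_norm_remainder_tendsto_0:
  assumes ab: "a < b" and ser: "pliable_series_i_ii a b c k0 cs gs" and fs: "smooth_on_J {a..b} f"
    and fsum: "\<forall>x\<in>{a..b}. ((\<lambda>k. cs k * gs k x) has_sum f x) {k0..}"
  shows "((\<lambda>l. cr_norm {a..b} r (\<lambda>x. f x - (\<Sum>k\<in>{k0..l}. cs k * gs k x))) \<longlongrightarrow> 0) at_top"
proof (rule tendstoI)
  fix \<epsilon> :: real assume \<epsilon>: "\<epsilon> > 0"
  define \<delta> where "\<delta> = \<epsilon> / (2 * (real r + 1))"
  have "(real r + 1) * \<delta> = \<epsilon> / 2" unfolding \<delta>_def by (simp add: field_simps)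
  then have \<delta>: "\<delta> > 0" "(real r + 1) * \<delta> < \<epsilon>"
    using \<epsilon> by (simp add: \<delta>_def, simp)
  have "\<forall>\<^sub>F N in sequentially. \<forall>i\<in>{..r}. \<forall>x\<in>{a..b}.
      dist (\<Sum>n<N. cs (k0 + int n) * jderivs {a..b} i (gs (k0 + int n)) x) (jderivs {a..b} i f x) < \<delta>"
    by (rule eventually_jderivs_partial_sums_close[OF ab ser fsum \<delta>(1)])
  moreover have "filterlim (\<lambda>l::int. nat (l - k0 + 1)) sequentially at_top"
    unfolding filterlim_at_top eventually_at_top_linorder
  proof (intro allI)
    show "\<exists>L. \<forall>l\<ge>L. Z \<le> nat (l - k0 + 1)" for Z :: nat
      by (rule exI[of _ "k0 + int Z"]) auto
  qed
  ultimately have "\<forall>\<^sub>F l in at_top. \<forall>i\<in>{..r}. \<forall>x\<in>{a..b}.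
      dist (\<Sum>n<nat (l - k0 + 1). cs (k0 + int n) * jderivs {a..b} i (gs (k0 + int n)) x) (jderivs {a..b} i f x) < \<delta>"
    by (rule eventually_compose_filterlim)
  then show "\<forall>\<^sub>F l in at_top. dist (cr_norm {a..b} r (\<lambda>x. f x - (\<Sum>k\<in>{k0..l}. cs k * gs k x))) 0 < \<epsilon>"
  proof eventually_elim
    case (elim l)
    define N where "N = nat (l - k0 + 1)"
    have gs: "smooth_on_J {a..b} (gs (k0 + int n))" for n
      using pliable_series_i_ii_D(2)[OF ser] by simp
    note SN = jderivs_sum[where F="{..<N}" and g="\<lambda>n. gs (k0 + int n)" and c="\<lambda>n. cs (k0 + int n)",
        OF ab gs]
    note R = jderivs_diff[OF ab fs SN[THEN conjunct1]]
    have eq: "(\<lambda>x. f x - (\<Sum>k\<in>{k0..l}. cs k * gs k x)) = (\<lambda>x. f x - (\<Sum>n<N. cs (k0 + int n) * gs (k0 + int n) x))"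
      by (simp add: N_def sum_atLeastAtMost_int_eq_lessThan_nat)
    have "\<bar>jderivs {a..b} i (\<lambda>x. f x - (\<Sum>n<N. cs (k0 + int n) * gs (k0 + int n) x)) x\<bar> \<le> \<delta>"
      if "i \<le> r" "x \<in> {a..b}" for i x
      using elim[rule_format, of i x] that R SN by (simp add: N_def dist_real_def abs_minus_commute)
    then have "cr_norm {a..b} r (\<lambda>x. f x - (\<Sum>k\<in>{k0..l}. cs k * gs k x)) \<le> (real r + 1) * \<delta>"
      unfolding eq using ab by (intro cr_norm_le) auto
    moreover have "0 \<le> cr_norm {a..b} r (\<lambda>x. f x - (\<Sum>k\<in>{k0..l}. cs k * gs k x))"
      unfolding eq using ab R by (intro cr_norm_nonneg) auto
    ultimately show ?case using \<delta>(2) by simp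
  qed
qed

lemma pliable_series_i_ii_jderivs:
  assumes ab: "a < b" and ser: "pliable_series_i_ii a b c k0 cs gs"
  shows "pliable_series_i_ii a b c k0 cs (\<lambda>k. jderivs {a..b} r (gs k))"
  unfolding pliable_series_i_ii_def
proof (intro conjI allI impI ballI)
  note sub = jsupp_jderivs[OF ab, of r]
  show "k0 \<le> k \<Longrightarrow> 0 < cs k" for k using pliable_series_i_ii_D(1)[OF ser] by blast
  show "superexp_conv cs 0" by (rule pliable_series_i_ii_superexp_grows[OF ser])
  show "k0 \<le> k \<Longrightarrow> smooth_on_J {a..b} (jderivs {a..b} r (gs k))" for k
    using pliable_series_i_ii_D(2)[OF ser] smooth_on_J_jderivs by blast
  show "compact (jsupp {a..b} (jderivs {a..b} r (gs k)))" for k by (rule compact_jsupp)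
  show "k0 \<le> k \<Longrightarrow> jsupp {a..b} (jderivs {a..b} r (gs k)) \<subseteq> {a..b} - {c}" for k
    using pliable_series_i_ii_D(3)[OF ser] sub by blast
  fix x assume "x \<in> {a..b} - {c}"
  then obtain e where e: "e > 0" "finite {k. k \<ge> k0 \<and> jsupp {a..b} (gs k) \<inter> ball x e \<noteq> {}}"
    by (rule pliable_series_i_ii_locally_finite[OF ser])
  have "{k. k \<ge> k0 \<and> jsupp {a..b} (jderivs {a..b} r (gs k)) \<inter> ball x e \<noteq> {}}
      \<subseteq> {k. k \<ge> k0 \<and> jsupp {a..b} (gs k) \<inter> ball x e \<noteq> {}}"
    using sub by blast
  then show "\<exists>e>0. finite {k. k \<ge> k0 \<and> jsupp {a..b} (jderivs {a..b} r (gs k)) \<inter> ball x e \<noteq> {}}"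
    using e finite_subset by blast
next
  fix s
  show "grows_at_most_exp k0 (\<lambda>k. cr_norm {a..b} s (jderivs {a..b} r (gs k)))"
  proof (rule grows_at_most_exp_dominated[where K=1])
    show "grows_at_most_exp k0 (\<lambda>k. cr_norm {a..b} (s + r) (gs k))"
      by (rule pliable_series_i_ii_superexp_grows[OF ser])
    fix k assume k: "k \<ge> k0"
    note gs = pliable_series_i_ii_D(2)[OF ser k]
    show "0 \<le> cr_norm {a..b} s (jderivs {a..b} r (gs k))"
      using cr_norm_nonneg[OF smooth_on_J_jderivs[OF gs]] ab by simp
  next
    fix k assume "k > k0"
    then show "cr_norm {a..b} s (jderivs {a..b} r (gs k)) \<le> 1 * cr_norm {a..b} (s + r) (gs k)"
      using cr_norm_jderivs[OF pliable_series_i_ii_D(2)[OF ser]] ab by simp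
  qed simp
qed

lemma pliable_series_jderivs:
  assumes ab: "a < b" and ser: "pliable_series a b c k0 cs gs"
  shows "pliable_series a b c k0 cs (\<lambda>k. jderivs {a..b} r (gs k))"
proof -
  obtain L where L: "L > 0" "annulus_bound a b c k0 gs (b - a) L L 1"
    using ser unfolding pliable_series_iff by blast
  have "annulus_bound a b c k0 (\<lambda>k. jderivs {a..b} r (gs k)) (min (b - a) (2 * (b - a) / 2)) L L 1"
    by (rule annulus_bound_supp_subset[OF L(2)]) (use jsupp_jderivs[OF ab] in blast)
  then show ?thesis
    using ser L(1) pliable_series_i_ii_jderivs[OF ab] unfolding pliable_series_iff by auto
qed

lemma jderivs_endpoint_eq_0:
  assumes ab: "a < b" and cc: "c = a \<or> c = b" and ser: "pliable_series_i_ii a b c k0 cs gs"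
    and fsum: "\<forall>x\<in>{a..b}. ((\<lambda>k. cs k * gs k x) has_sum f x) {k0..}"
  shows "jderivs {a..b} r f c = 0"
proof -
  have c: "c \<in> {a..b}" using cc ab by auto
  have "c \<notin> jsupp {a..b} (jderivs {a..b} r (gs k))" if "k \<in> {k0..}" for k
    using pliable_series_i_ii_D(3)[OF ser] jsupp_jderivs[OF ab] that by fastforce
  then have "((\<lambda>k. cs k * jderivs {a..b} r (gs k) c) has_sum 0) {k0..}"
    by (intro has_sum_0) (simp add: not_in_jsupp_imp_zero[OF c])
  then show ?thesis
    using jderivs_series_has_sum[OF ab ser fsum c] has_sum_unique by blast
qed

lemma pliable_jderivs:
  assumes ab: "a < b" and cc: "c = a \<or> c = b" and fs: "smooth_on_J {a..b} f"
    and ser: "pliable_series a b c k0 cs gs"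
    and fsum: "\<forall>x\<in>{a..b}. ((\<lambda>k. cs k * gs k x) has_sum f x) {k0..}"
  shows "pliable {a..b} c (jderivs {a..b} r f)"
proof -
  have "pliable_series_i_ii a b c k0 cs gs" using ser unfolding pliable_series_iff by blast
  then show ?thesis
    unfolding pliable_def using ab cc smooth_on_J_jderivs[OF fs] pliable_series_jderivs[OF ab ser]
      jderivs_series_has_sum[OF ab _ fsum] by blast
qed

section \<open>Normalising condition (iii) by an index shift\<close>

lemma finite_indices_away_from_endpoint:
  assumes ser: "pliable_series_i_ii a b c k0 cs gs" and \<eta>: "\<eta> > 0"
  shows "finite {k. k \<ge> k0 \<and> jsupp {a..b} (gs k) \<inter> {x\<in>{a..b}. \<eta> \<le> \<bar>x - c\<bar>} \<noteq> {}}"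
proof -
  define A where "A = {x\<in>{a..b}. \<eta> \<le> \<bar>x - c\<bar>}"
  have "A = {a..b} - ball c \<eta>" by (auto simp: A_def dist_real_def)
  then have "compact A" by (simp add: compact_diff)
  have "\<exists>e>0. finite {k. k \<ge> k0 \<and> jsupp {a..b} (gs k) \<inter> ball x e \<noteq> {}}" if "x \<in> A" for x
    using pliable_series_i_ii_locally_finite[OF ser, of x] that \<eta> unfolding A_def by force
  then obtain e where e: "\<And>x. x \<in> A \<Longrightarrow> e x > 0 \<and> finite {k. k \<ge> k0 \<and> jsupp {a..b} (gs k) \<inter> ball x (e x) \<noteq> {}}"
    by metis
  have "A \<subseteq> (\<Union>x\<in>A. ball x (e x))" using e by force
  then obtain A' where A': "A' \<subseteq> A" "finite A'" "A \<subseteq> (\<Union>x\<in>A'. ball x (e x))"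
    using compactE_image[OF \<open>compact A\<close>, of A "\<lambda>x. ball x (e x)"] by blast
  have "{k. k \<ge> k0 \<and> jsupp {a..b} (gs k) \<inter> A \<noteq> {}} \<subseteq>
      (\<Union>x\<in>A'. {k. k \<ge> k0 \<and> jsupp {a..b} (gs k) \<inter> ball x (e x) \<noteq> {}})"
    using A'(3) by blast
  moreover have "finite (\<Union>x\<in>A'. {k. k \<ge> k0 \<and> jsupp {a..b} (gs k) \<inter> ball x (e x) \<noteq> {}})"
    using A'(1,2) e by blast
  ultimately show ?thesis unfolding A_def by (rule finite_subset)
qed

text \<open>Scales \<open>\<epsilon> \<ge> \<epsilon>0\<close> only see the finitely many indices whose supports stay away from \<open>c\<close>.\<close>
lemma annulus_bound_all_scales:
  assumes ser: "pliable_series_i_ii a b c k0 cs gs" and bound: "annulus_bound a b c k0 gs \<epsilon>0 N L C"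
    and \<epsilon>0: "\<epsilon>0 > 0" and C: "C > 0"
  obtains N' C' where "C' > 0" "annulus_bound a b c k0 gs (b - a) N' L C'"
proof -
  define F where "F = {k. k \<ge> k0 \<and> jsupp {a..b} (gs k) \<inter> {x\<in>{a..b}. \<epsilon>0 \<le> \<bar>x - c\<bar>} \<noteq> {}}"
  have fin: "finite F" unfolding F_def by (rule finite_indices_away_from_endpoint[OF ser \<epsilon>0])
  define M where "M = (\<Sum>k\<in>F. 2 powr (- (real_of_int k * L)))"
  have M0: "M \<ge> 0" unfolding M_def by (intro sum_nonneg) auto
  have MF: "2 powr (- (real_of_int k * L)) \<le> M" if "k \<in> F" for k
    unfolding M_def by (rule member_le_sum[OF that _ fin]) auto
  define C' where "C' = C + M / \<epsilon>0"
  have "annulus_bound a b c k0 gs (b - a) (max N (real (card F))) L C'"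
    unfolding annulus_bound_def
  proof (intro allI impI)
    fix \<epsilon> :: real assume \<epsilon>: "0 < \<epsilon> \<and> \<epsilon> < b - a \<and> 2 * \<epsilon> < b - a"
    let ?J = "annulus_indices a b c k0 gs \<epsilon>"
    show "finite ?J \<and> real (card ?J) \<le> max N (real (card F)) \<and>
        (\<forall>k\<in>?J. 2 powr (- (real_of_int k * L)) \<le> C' * \<epsilon>)"
    proof (cases "\<epsilon> < \<epsilon>0")
      case True
      have "C * \<epsilon> \<le> C' * \<epsilon>" unfolding C'_def using \<epsilon> M0 \<epsilon>0 by (simp add: mult_right_mono)
      moreover have "finite ?J" "real (card ?J) \<le> N"
        "\<And>k. k \<in> ?J \<Longrightarrow> 2 powr (- (real_of_int k * L)) \<le> C * \<epsilon>"
        using bound \<epsilon> True unfolding annulus_bound_def by auto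
      ultimately show ?thesis by force
    next
      case False
      have sub: "?J \<subseteq> F" unfolding annulus_indices_def F_def using False by force
      have "M \<le> (M / \<epsilon>0) * \<epsilon>" using False \<epsilon>0 M0 by (simp add: field_simps mult_left_mono)
      also have "\<dots> \<le> C' * \<epsilon>" unfolding C'_def using \<epsilon> C by (simp add: distrib_right)
      finally have "M \<le> C' * \<epsilon>" .
      then show ?thesis using sub finite_subset[OF sub fin] card_mono[OF fin sub] MF by force
    qed
  qed
  moreover have "C' > 0" unfolding C'_def using C M0 \<epsilon>0 by (simp add: add_pos_nonneg)
  ultimately show ?thesis using that by blast
qed

lemma annulus_indices_shift:
  "annulus_indices a b c (k0 + m) (\<lambda>k. gs (k - m)) \<epsilon> = (\<lambda>k. k + m) ` annulus_indices a b c k0 gs \<epsilon>"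
proof (intro set_eqI iffI)
  fix k assume "k \<in> annulus_indices a b c (k0 + m) (\<lambda>k. gs (k - m)) \<epsilon>"
  then show "k \<in> (\<lambda>k. k + m) ` annulus_indices a b c k0 gs \<epsilon>"
    by (intro image_eqI[of _ _ "k - m"]) (auto simp: annulus_indices_def)
qed (auto simp: annulus_indices_def)

text \<open>Shifting the indices by \<open>m\<close> trades the constant \<open>C\<close> for the factor \<open>2 powr (- m L)\<close>.\<close>
lemma annulus_bound_shift:
  assumes bound: "annulus_bound a b c k0 gs \<epsilon>0 N L C"
    and L: "L > 0" "N \<le> L'" "L \<le> L'" and m: "k0 + m \<ge> 0" and C: "C \<le> 2 powr (real_of_int m * L)"
  shows "annulus_bound a b c (k0 + m) (\<lambda>k. gs (k - m)) \<epsilon>0 L' L' 1"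
  unfolding annulus_bound_def annulus_indices_shift
proof (intro allI impI conjI ballI)
  fix \<epsilon> :: real assume \<epsilon>: "0 < \<epsilon> \<and> \<epsilon> < \<epsilon>0 \<and> 2 * \<epsilon> < b - a"
  let ?J = "annulus_indices a b c k0 gs \<epsilon>"
  have J: "finite ?J" "real (card ?J) \<le> N" "\<And>k. k \<in> ?J \<Longrightarrow> 2 powr (- (real_of_int k * L)) \<le> C * \<epsilon>"
    using bound \<epsilon> unfolding annulus_bound_def by auto
  show "finite ((\<lambda>k. k + m) ` ?J)" using J(1) by simp
  show "real (card ((\<lambda>k. k + m) ` ?J)) \<le> L'"
    using J(2) L by (subst card_image) (auto simp: inj_on_def)
  fix k' assume "k' \<in> (\<lambda>k. k + m) ` ?J"
  then obtain k where k: "k \<in> ?J" "k' = k + m" by blast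
  have "k' \<ge> 0" using k m unfolding annulus_indices_def by auto
  then have "2 powr (- (real_of_int k' * L')) \<le> 2 powr (- (real_of_int k' * L))"
    using L by (intro powr_mono) (auto intro: mult_left_mono)
  also have "\<dots> = 2 powr (- (real_of_int k * L)) / 2 powr (real_of_int m * L)"
    by (simp add: k(2) algebra_simps powr_diff flip: powr_add)
  also have "\<dots> \<le> C * \<epsilon> / 2 powr (real_of_int m * L)"
    by (intro divide_right_mono J(3) k(1)) auto
  also have "\<dots> \<le> 1 * \<epsilon>"
    using C \<epsilon> by (simp add: divide_le_eq mult_right_mono)
  finally show "2 powr (- (real_of_int k' * L')) \<le> 1 * \<epsilon>" .
qed

lemma pliable_series_i_ii_shift:
  assumes ser: "pliable_series_i_ii a b c k0 cs gs"
  shows "pliable_series_i_ii a b c (k0 + m) (\<lambda>k. cs (k - m)) (\<lambda>k. gs (k - m))"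
  unfolding pliable_series_i_ii_def
proof (intro conjI allI impI ballI)
  show "k0 + m \<le> k \<Longrightarrow> 0 < cs (k - m)" for k using pliable_series_i_ii_D(1)[OF ser] by simp
  show "k0 + m \<le> k \<Longrightarrow> smooth_on_J {a..b} (gs (k - m))" for k using pliable_series_i_ii_D(2)[OF ser] by simp
  show "compact (jsupp {a..b} (gs (k - m)))" for k by (rule compact_jsupp)
  show "k0 + m \<le> k \<Longrightarrow> jsupp {a..b} (gs (k - m)) \<subseteq> {a..b} - {c}" for k
    using pliable_series_i_ii_D(3)[OF ser] by simp
  show "superexp_conv (\<lambda>k. cs (k - m)) 0"
    by (rule superexp_conv_shift[OF pliable_series_i_ii_superexp_grows(1)[OF ser]])
  show "grows_at_most_exp (k0 + m) (\<lambda>k. cr_norm {a..b} r (gs (k - m)))" for r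
    by (rule grows_at_most_exp_shift[OF pliable_series_i_ii_superexp_grows(2)[OF ser]])
  fix x assume "x \<in> {a..b} - {c}"
  then obtain e where e: "e > 0" "finite {k. k \<ge> k0 \<and> jsupp {a..b} (gs k) \<inter> ball x e \<noteq> {}}"
    by (rule pliable_series_i_ii_locally_finite[OF ser])
  have "{k. k \<ge> k0 + m \<and> jsupp {a..b} (gs (k - m)) \<inter> ball x e \<noteq> {}} \<subseteq>
      (\<lambda>k. k + m) ` {k. k \<ge> k0 \<and> jsupp {a..b} (gs k) \<inter> ball x e \<noteq> {}}"
  proof
    fix k assume "k \<in> {k. k \<ge> k0 + m \<and> jsupp {a..b} (gs (k - m)) \<inter> ball x e \<noteq> {}}"
    then show "k \<in> (\<lambda>k. k + m) ` {k. k \<ge> k0 \<and> jsupp {a..b} (gs k) \<inter> ball x e \<noteq> {}}"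
      by (intro image_eqI[of _ _ "k - m"]) auto
  qed
  then show "\<exists>e>0. finite {k. k \<ge> k0 + m \<and> jsupp {a..b} (gs (k - m)) \<inter> ball x e \<noteq> {}}"
    using e finite_subset by blast
qed

lemma has_sum_shift_int:
  fixes F :: "int \<Rightarrow> 'a::{comm_monoid_add,topological_space}"
  shows "((\<lambda>k. F (k - m)) has_sum s) {k0 + m..} \<longleftrightarrow> (F has_sum s) {k0..}"
  using has_sum_atLeast_int_iff[of "\<lambda>k. F (k - m)" "k0 + m" s] has_sum_atLeast_int_iff[of F k0 s]
  by (simp add: algebra_simps)

lemma pliable_if_annulus_bound:
  assumes ab: "a < b" and cc: "c = a \<or> c = b" and fs: "smooth_on_J {a..b} f"
    and ser: "pliable_series_i_ii a b c k0 cs gs"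
    and bound: "annulus_bound a b c k0 gs \<epsilon>0 N L C" "\<epsilon>0 > 0" "L > 0" "C > 0"
    and fsum: "\<forall>x\<in>{a..b}. ((\<lambda>k. cs k * gs k x) has_sum f x) {k0..}"
  shows "pliable {a..b} c f"
proof -
  obtain N' C' where C': "C' > 0" and bound': "annulus_bound a b c k0 gs (b - a) N' L C'"
    using annulus_bound_all_scales[OF ser bound(1,2,4)] by blast
  obtain m :: nat where m: "max (- real_of_int k0) (log 2 C' / L) \<le> real m"
    using real_arch_simple by blast
  have "log 2 C' \<le> real m * L" using m bound(3) by (simp add: pos_divide_le_eq)
  then have "C' \<le> 2 powr (real_of_int (int m) * L)"
    using C' by (simp add: log_le_iff le_log_iff)
  moreover have "k0 + int m \<ge> 0" using m by linarith
  ultimately have "annulus_bound a b c (k0 + int m) (\<lambda>k. gs (k - int m)) (b - a) (max N' L) (max N' L) 1"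
    by (intro annulus_bound_shift[OF bound' bound(3)]) auto
  then have "pliable_series a b c (k0 + int m) (\<lambda>k. cs (k - int m)) (\<lambda>k. gs (k - int m))"
    unfolding pliable_series_iff using pliable_series_i_ii_shift[OF ser] bound(3)
    by (intro conjI exI[of _ "max N' L"]) auto
  moreover have "((\<lambda>k. cs (k - int m) * gs (k - int m) x) has_sum f x) {k0 + int m..}" if "x \<in> {a..b}" for x
    using fsum that has_sum_shift_int[of "\<lambda>k. cs k * gs k x"] by simp
  ultimately show ?thesis unfolding pliable_def using ab cc fs by blast
qed

section \<open>Multiplication by smooth functions and compactly supported perturbations\<close>

definition series_mult_add ::
  "int \<Rightarrow> (int \<Rightarrow> real) \<Rightarrow> (real \<Rightarrow> real) \<Rightarrow> (real \<Rightarrow> real) \<Rightarrow> (int \<Rightarrow> real \<Rightarrow> real) \<Rightarrow> int \<Rightarrow> real \<Rightarrow> real"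
  where "series_mult_add k0 cs h g gs k =
    (if k = k0 then (\<lambda>x. h x * gs k x + inverse (cs k) * g x) else (\<lambda>x. h x * gs k x))"

lemma jsupp_series_mult_add:
  "jsupp J (series_mult_add k0 cs h g gs k) \<subseteq> jsupp J (gs k) \<union> jsupp J g"
proof -
  have mult: "jsupp J (\<lambda>x. h x * gs k x) \<subseteq> jsupp J (gs k)"
    by (rule jsupp_mono) simp
  have "jsupp J (\<lambda>x. inverse (cs k) * g x) \<subseteq> jsupp J g"
    by (rule jsupp_mono) simp
  then show ?thesis
    using mult jsupp_add[of J "\<lambda>x. h x * gs k x" "\<lambda>x. inverse (cs k) * g x"]
    by (cases "k = k0") (auto simp: series_mult_add_def)
qed

lemma has_sum_series_mult_add:
  assumes "((\<lambda>k. cs k * gs k x) has_sum f x) {k0..}" and "cs k0 \<noteq> 0"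
  shows "((\<lambda>k. cs k * series_mult_add k0 cs h g gs k x) has_sum (h x * f x + g x)) {k0..}"
proof -
  have "((\<lambda>k. h x * (cs k * gs k x)) has_sum (h x * f x)) {k0..}"
    using assms(1) by (rule has_sum_cmult_right)
  moreover have "((\<lambda>k. if k = k0 then g x else 0) has_sum g x) {k0..}"
    by (rule has_sum_finite_neutralI[of "{k0}"]) auto
  ultimately have sum: "((\<lambda>k. h x * (cs k * gs k x) + (if k = k0 then g x else 0)) has_sum (h x * f x + g x)) {k0..}"
    by (rule has_sum_add)
  have "cs k * series_mult_add k0 cs h g gs k x = h x * (cs k * gs k x) + (if k = k0 then g x else 0)" for k
    using assms(2) by (cases "k = k0") (simp_all add: series_mult_add_def field_simps)
  then show ?thesis by (simp only: sum)
qed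

lemma pliable_series_i_ii_series_mult_add:
  assumes ab: "a < b" and ser: "pliable_series_i_ii a b c k0 cs gs"
    and h: "smooth_on_J {a..b} h" and g: "smooth_on_J {a..b} g" and g_supp: "jsupp {a..b} g \<subseteq> {a..b} - {c}"
  shows "pliable_series_i_ii a b c k0 cs (series_mult_add k0 cs h g gs)"
    (is "pliable_series_i_ii a b c k0 cs ?gs")
proof -
  have hgs: "smooth_on_J {a..b} (\<lambda>x. h x * gs k x)" if "k \<ge> k0" for k
    using jderivs_mult[OF ab h pliable_series_i_ii_D(2)[OF ser that]] by blast
  have smooth: "smooth_on_J {a..b} (?gs k)" if "k \<ge> k0" for k
    using hgs[OF that] smooth_on_J_add[OF ab hgs[OF that] smooth_on_J_cmult[OF ab g]]
    by (auto simp: series_mult_add_def)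
  show ?thesis
    unfolding pliable_series_i_ii_def
  proof (intro conjI allI impI ballI)
    show "k0 \<le> k \<Longrightarrow> 0 < cs k" for k using pliable_series_i_ii_D(1)[OF ser] by blast
    show "superexp_conv cs 0" by (rule pliable_series_i_ii_superexp_grows[OF ser])
    show "k0 \<le> k \<Longrightarrow> smooth_on_J {a..b} (?gs k)" for k by (rule smooth)
    show "compact (jsupp {a..b} (?gs k))" for k by (rule compact_jsupp)
    show "k0 \<le> k \<Longrightarrow> jsupp {a..b} (?gs k) \<subseteq> {a..b} - {c}" for k
      using pliable_series_i_ii_D(3)[OF ser] jsupp_series_mult_add g_supp by blast
    fix x assume "x \<in> {a..b} - {c}"
    then obtain e where e: "e > 0" "finite {k. k \<ge> k0 \<and> jsupp {a..b} (gs k) \<inter> ball x e \<noteq> {}}"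
      by (rule pliable_series_i_ii_locally_finite[OF ser])
    have "jsupp {a..b} (?gs k) \<subseteq> jsupp {a..b} (gs k)" if "k \<noteq> k0" for k
      using that by (simp add: series_mult_add_def, intro jsupp_mono) simp
    then have "{k. k \<ge> k0 \<and> jsupp {a..b} (?gs k) \<inter> ball x e \<noteq> {}} \<subseteq>
        insert k0 {k. k \<ge> k0 \<and> jsupp {a..b} (gs k) \<inter> ball x e \<noteq> {}}"
      by blast
    then show "\<exists>e>0. finite {k. k \<ge> k0 \<and> jsupp {a..b} (?gs k) \<inter> ball x e \<noteq> {}}"
      using e finite_subset by blast
  next
    fix r
    show "grows_at_most_exp k0 (\<lambda>k. cr_norm {a..b} r (?gs k))"
    proof (rule grows_at_most_exp_dominated)
      show "grows_at_most_exp k0 (\<lambda>k. cr_norm {a..b} r (gs k))"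
        by (rule pliable_series_i_ii_superexp_grows[OF ser])
      show "0 \<le> (real r + 1) * 2 ^ r * cr_norm {a..b} r h"
        using cr_norm_nonneg[OF h] ab by simp
      show "0 \<le> cr_norm {a..b} r (?gs k)" if "k \<ge> k0" for k
        using cr_norm_nonneg[OF smooth[OF that]] ab by simp
      show "cr_norm {a..b} r (?gs k) \<le> (real r + 1) * 2 ^ r * cr_norm {a..b} r h * cr_norm {a..b} r (gs k)"
        if "k > k0" for k
        using that cr_norm_mult[OF ab h pliable_series_i_ii_D(2)[OF ser]] by (simp add: series_mult_add_def)
    qed
  qed
qed

lemma pliable_mult_add:
  assumes ab: "a < b" and cc: "c = a \<or> c = b" and fs: "smooth_on_J {a..b} f"
    and ser: "pliable_series a b c k0 cs gs"
    and fsum: "\<forall>x\<in>{a..b}. ((\<lambda>k. cs k * gs k x) has_sum f x) {k0..}"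
    and h: "smooth_on_J {a..b} h" and g: "smooth_on_J {a..b} g" and g_supp: "jsupp {a..b} g \<subseteq> {a..b} - {c}"
  shows "pliable {a..b} c (\<lambda>x. h x * f x + g x)"
proof -
  obtain L where L: "L > 0" "annulus_bound a b c k0 gs (b - a) L L 1"
    and ser': "pliable_series_i_ii a b c k0 cs gs"
    using ser unfolding pliable_series_iff by blast
  have "open (- jsupp {a..b} g)" unfolding jsupp_def by (rule open_Compl[OF closed_closure])
  moreover have "c \<in> - jsupp {a..b} g" using g_supp by blast
  ultimately obtain \<delta> where \<delta>: "\<delta> > 0" "cball c \<delta> \<subseteq> - jsupp {a..b} g"
    using open_contains_cball by blast
  then have "jsupp {a..b} (series_mult_add k0 cs h g gs k) \<inter> cball c \<delta> \<subseteq> jsupp {a..b} (gs k)" for k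
    using jsupp_series_mult_add[of "{a..b}" k0 cs h g gs k] by blast
  then have "annulus_bound a b c k0 (series_mult_add k0 cs h g gs) (min (b - a) (\<delta> / 2)) L L 1"
    by (rule annulus_bound_supp_subset[OF L(2)])
  moreover have "min (b - a) (\<delta> / 2) > 0" using ab \<delta>(1) by simp
  moreover have "smooth_on_J {a..b} (\<lambda>x. h x * f x + g x)"
    using jderivs_mult[OF ab h fs] smooth_on_J_add[OF ab _ g] by blast
  moreover have "\<forall>x\<in>{a..b}. ((\<lambda>k. cs k * series_mult_add k0 cs h g gs k x) has_sum (h x * f x + g x)) {k0..}"
    using fsum pliable_series_i_ii_D(1)[OF ser', of k0] by (simp add: has_sum_series_mult_add)
  ultimately show ?thesis
    using pliable_if_annulus_bound[OF ab cc _ pliable_series_i_ii_series_mult_add[OF ab ser' h g g_supp]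
        _ _ L(1) zero_less_one]
    by blast
qed

section \<open>Composition with diffeomorphisms\<close>

lemma smooth_on_J_lipschitz:
  assumes ab: "(a::real) < b" and u: "smooth_on_J {a..b} u"
  obtains M where "M \<ge> 1" "\<And>x y. x \<in> {a..b} \<Longrightarrow> y \<in> {a..b} \<Longrightarrow> \<bar>u x - u y\<bar> \<le> M * \<bar>x - y\<bar>"
proof -
  define B where "B = Sup ((\<lambda>x. \<bar>jderivs {a..b} (Suc 0) u x\<bar>) ` {a..b})"
  have "\<bar>u x - u y\<bar> \<le> max 1 B * \<bar>x - y\<bar>" if x: "x \<in> {a..b}" and y: "y \<in> {a..b}" for x y
  proof -
    have "norm (u x - u y) \<le> max 1 B * norm (x - y)"
    proof (rule field_differentiable_bound[OF convex_real_interval(5) _ _ x y])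
      fix z assume z: "z \<in> {a..b}"
      show "(u has_field_derivative jderivs {a..b} (Suc 0) u z) (at z within {a..b})"
        using smooth_on_J_has_derivative[OF u z, of 0] by simp
      show "norm (jderivs {a..b} (Suc 0) u z) \<le> max 1 B"
        using abs_le_SUP_abs[OF continuous_on_jderivs[OF u, of "Suc 0"] z] unfolding B_def by simp
    qed
    then show ?thesis by simp
  qed
  then show ?thesis using that[of "max 1 B"] by simp
qed

lemma dyadic_bracket:
  fixes s :: real
  shows "1 \<le> s \<Longrightarrow> s \<le> 2 ^ Suc n \<Longrightarrow> \<exists>j\<le>n. 2 ^ j \<le> s \<and> s \<le> 2 ^ Suc j"
proof (induction n)
  case 0
  then show ?case by auto
next
  case (Suc n)
  show ?case
  proof (cases "s \<le> 2 ^ Suc n")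
    case True
    then show ?thesis using Suc by (meson le_SucI)
  next
    case False
    then show ?thesis using Suc by (intro exI[of _ "Suc n"]) auto
  qed
qed

locale interval_diffeo =
  fixes a b a' b' :: real and d :: "real \<Rightarrow> real"
  assumes lt: "a < b" and diffeo: "diffeo_J {a'..b'} {a..b} d"
begin

abbreviation d_inv :: "real \<Rightarrow> real" where
  "d_inv \<equiv> the_inv_into {a'..b'} d"

lemma inj: "inj_on d {a'..b'}" and image: "d ` {a'..b'} = {a..b}"
  using diffeo unfolding diffeo_J_def bij_betw_def by auto

lemma smooth_d: "smooth_on_J {a'..b'} d" and smooth_d_inv: "smooth_on_J {a..b} d_inv"
  using diffeo unfolding diffeo_J_def by auto

lemma d_in: "y \<in> {a'..b'} \<Longrightarrow> d y \<in> {a..b}"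
  using image by blast

lemma d_inv_in: "x \<in> {a..b} \<Longrightarrow> d_inv x \<in> {a'..b'}"
  using the_inv_into_into[OF inj] image by blast

lemma d_inv_d [simp]: "y \<in> {a'..b'} \<Longrightarrow> d_inv (d y) = y"
  by (rule the_inv_into_f_f[OF inj])

lemma d_d_inv [simp]: "x \<in> {a..b} \<Longrightarrow> d (d_inv x) = x"
  using f_the_inv_into_f[OF inj] image by blast

lemma lt': "a' < b'"
proof (rule ccontr)
  assume "\<not> a' < b'"
  then have "{a'..b'} \<subseteq> {a'}" by auto
  then have "finite {a'..b'}" using finite_subset by blast
  then have "finite {a..b}" using image finite_imageI by metis
  then show False using infinite_Icc[OF lt] by simp
qed

lemma d_inv_endpoint:
  assumes cc: "c = a \<or> c = b"
  shows "d_inv c = a' \<or> d_inv c = b'"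
proof (rule ccontr)
  have c: "c \<in> {a..b}" using cc lt by auto
  assume "\<not> ?thesis"
  then have "a' < d_inv c" "d_inv c < b'" using d_inv_in[OF c] by auto
  from continuous_inj_imp_mono[OF this smooth_on_J_imp_continuous_on[OF smooth_d] inj]
  have "(d a' < c \<and> c < d b') \<or> (d b' < c \<and> c < d a')" using c by simp
  moreover have "d a' \<in> {a..b}" "d b' \<in> {a..b}" using lt' by (intro d_in; simp)+
  ultimately show False using cc by auto
qed

lemma jsupp_comp: "jsupp {a'..b'} (\<lambda>y. u (d y)) \<subseteq> d_inv ` jsupp {a..b} u"
proof -
  have "compact (d_inv ` jsupp {a..b} u)"
    by (rule compact_continuous_image[OF continuous_on_subset[OF
          smooth_on_J_imp_continuous_on[OF smooth_d_inv] jsupp_subset] compact_jsupp])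
  moreover have "{y\<in>{a'..b'}. u (d y) \<noteq> 0} \<subseteq> d_inv ` jsupp {a..b} u"
  proof
    fix y assume y: "y \<in> {y\<in>{a'..b'}. u (d y) \<noteq> 0}"
    then have "d y \<in> jsupp {a..b} u"
      using d_in closure_subset unfolding jsupp_def by fastforce
    then show "y \<in> d_inv ` jsupp {a..b} u" using y by (auto intro: image_eqI[of _ _ "d y"])
  qed
  ultimately show ?thesis unfolding jsupp_def[of "{a'..b'}"] by (intro closure_minimal compact_imp_closed)
qed

lemma jsupp_comp_avoids:
  assumes c: "c \<in> {a..b}" and u: "jsupp {a..b} u \<subseteq> {a..b} - {c}"
  shows "jsupp {a'..b'} (\<lambda>y. u (d y)) \<subseteq> {a'..b'} - {d_inv c}"
proof
  fix y assume "y \<in> jsupp {a'..b'} (\<lambda>y. u (d y))"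
  then obtain w where w: "w \<in> jsupp {a..b} u" "y = d_inv w" using jsupp_comp by blast
  then have "w \<in> {a..b}" "w \<noteq> c" using u by auto
  then have "d_inv w \<noteq> d_inv c" using c d_d_inv by metis
  then show "y \<in> {a'..b'} - {d_inv c}" using w d_inv_in \<open>w \<in> {a..b}\<close> by auto
qed

lemma finite_indices_comp_near:
  assumes y: "y \<in> {a'..b'}" and e: "e > 0"
    and fin: "finite {k. k \<ge> k0 \<and> jsupp {a..b} (gs k) \<inter> ball (d y) e \<noteq> {}}"
  obtains e' where "e' > 0" "finite {k. k \<ge> k0 \<and> jsupp {a'..b'} (\<lambda>y. gs k (d y)) \<inter> ball y e' \<noteq> {}}"
proof -
  obtain M where M: "M \<ge> 1" "\<And>x y. x \<in> {a'..b'} \<Longrightarrow> y \<in> {a'..b'} \<Longrightarrow> \<bar>d x - d y\<bar> \<le> M * \<bar>x - y\<bar>"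
    using smooth_on_J_lipschitz[OF lt' smooth_d] by blast
  have "{k. k \<ge> k0 \<and> jsupp {a'..b'} (\<lambda>y. gs k (d y)) \<inter> ball y (e / M) \<noteq> {}} \<subseteq>
      {k. k \<ge> k0 \<and> jsupp {a..b} (gs k) \<inter> ball (d y) e \<noteq> {}}"
  proof safe
    fix k z assume k: "k \<ge> k0" and z: "z \<in> jsupp {a'..b'} (\<lambda>y. gs k (d y))" "z \<in> ball y (e / M)"
    then obtain w where w: "w \<in> jsupp {a..b} (gs k)" "z = d_inv w" using jsupp_comp by blast
    have wJ: "w \<in> {a..b}" using w(1) jsupp_subset by blast
    have "\<bar>w - d y\<bar> = \<bar>d z - d y\<bar>" using w(2) wJ by simp
    also have "\<dots> \<le> M * \<bar>z - y\<bar>" using M(2)[OF d_inv_in[OF wJ] y] w(2) by simp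
    also have "\<dots> < M * (e / M)"
      using z(2) M(1) by (intro mult_strict_left_mono) (auto simp: dist_real_def abs_minus_commute)
    also have "\<dots> = e" using M(1) by simp
    finally have "w \<in> ball (d y) e" by (simp add: dist_real_def abs_minus_commute)
    moreover assume "jsupp {a..b} (gs k) \<inter> ball (d y) e = {}"
    ultimately show False using w(1) by blast
  qed
  then show ?thesis
    using that[of "e / M"] e M(1) finite_subset[OF _ fin] by auto
qed

lemma pliable_series_i_ii_comp:
  assumes ser: "pliable_series_i_ii a b c k0 cs gs" and c: "c \<in> {a..b}"
  shows "pliable_series_i_ii a' b' (d_inv c) k0 cs (\<lambda>k y. gs k (d y))"
  unfolding pliable_series_i_ii_def
proof (intro conjI allI impI ballI)
  have img: "d ` {a'..b'} \<subseteq> {a..b}" using image by simp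
  show "k0 \<le> k \<Longrightarrow> 0 < cs k" for k using pliable_series_i_ii_D(1)[OF ser] by blast
  show "superexp_conv cs 0" by (rule pliable_series_i_ii_superexp_grows[OF ser])
  show "k0 \<le> k \<Longrightarrow> smooth_on_J {a'..b'} (\<lambda>y. gs k (d y))" for k
    using jderivs_comp[OF lt lt' smooth_d img pliable_series_i_ii_D(2)[OF ser]] by blast
  show "compact (jsupp {a'..b'} (\<lambda>y. gs k (d y)))" for k by (rule compact_jsupp)
  show "k0 \<le> k \<Longrightarrow> jsupp {a'..b'} (\<lambda>y. gs k (d y)) \<subseteq> {a'..b'} - {d_inv c}" for k
    by (rule jsupp_comp_avoids[OF c pliable_series_i_ii_D(3)[OF ser]])
next
  fix y assume y: "y \<in> {a'..b'} - {d_inv c}"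
  then have "d y \<in> {a..b} - {c}" using d_in d_inv_d by force
  then obtain e where "e > 0" "finite {k. k \<ge> k0 \<and> jsupp {a..b} (gs k) \<inter> ball (d y) e \<noteq> {}}"
    by (rule pliable_series_i_ii_locally_finite[OF ser])
  from finite_indices_comp_near[OF _ this] y
  show "\<exists>e>0. finite {k. k \<ge> k0 \<and> jsupp {a'..b'} (\<lambda>y. gs k (d y)) \<inter> ball y e \<noteq> {}}"
    by blast
next
  fix r
  have img: "d ` {a'..b'} \<subseteq> {a..b}" using image by simp
  obtain A where A: "A \<ge> 0"
    "\<And>g. smooth_on_J {a..b} g \<Longrightarrow> cr_norm {a'..b'} r (\<lambda>y. g (d y)) \<le> A * cr_norm {a..b} r g"
    using cr_norm_comp_le[OF lt lt' smooth_d img] by blast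
  show "grows_at_most_exp k0 (\<lambda>k. cr_norm {a'..b'} r (\<lambda>y. gs k (d y)))"
  proof (rule grows_at_most_exp_dominated[OF pliable_series_i_ii_superexp_grows(2)[OF ser] A(1)])
    fix k assume "k \<ge> k0"
    then show "0 \<le> cr_norm {a'..b'} r (\<lambda>y. gs k (d y))"
      using jderivs_comp[OF lt lt' smooth_d img pliable_series_i_ii_D(2)[OF ser]] lt'
      by (intro cr_norm_nonneg) auto
  next
    fix k assume "k > k0"
    then show "cr_norm {a'..b'} r (\<lambda>y. gs k (d y)) \<le> A * cr_norm {a..b} r (gs k)"
      using A(2) pliable_series_i_ii_D(2)[OF ser] by simp
  qed
qed

text \<open>With Lipschitz constants \<open>M1\<close> for \<open>d\<close> and \<open>M2\<close> for its inverse, a point at distance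
  between \<open>\<epsilon>\<close> and \<open>2 \<epsilon>\<close> from \<open>d_inv c\<close> is mapped to distance between \<open>\<epsilon> / M2\<close> and
  \<open>2 M1 \<epsilon>\<close> from \<open>c\<close>, a range covered by \<open>n + 1\<close> dyadic annuli.\<close>
lemma annulus_indices_comp_subset:
  assumes c: "c \<in> {a..b}" and \<epsilon>: "\<epsilon> > 0"
    and M1: "M1 \<ge> 1" "\<And>x y. x \<in> {a'..b'} \<Longrightarrow> y \<in> {a'..b'} \<Longrightarrow> \<bar>d x - d y\<bar> \<le> M1 * \<bar>x - y\<bar>"
    and M2: "M2 \<ge> 1" "\<And>x y. x \<in> {a..b} \<Longrightarrow> y \<in> {a..b} \<Longrightarrow> \<bar>d_inv x - d_inv y\<bar> \<le> M2 * \<bar>x - y\<bar>"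
    and n: "2 * (M1 * M2) \<le> 2 ^ Suc n"
  shows "annulus_indices a' b' (d_inv c) k0 (\<lambda>k y. gs k (d y)) \<epsilon>
    \<subseteq> (\<Union>j\<le>n. annulus_indices a b c k0 gs (\<epsilon> * 2 ^ j / M2))"
proof
  fix k assume "k \<in> annulus_indices a' b' (d_inv c) k0 (\<lambda>k y. gs k (d y)) \<epsilon>"
  then obtain y where y: "k \<ge> k0" "y \<in> jsupp {a'..b'} (\<lambda>y. gs k (d y))" "y \<in> {a'..b'}"
      "\<epsilon> \<le> \<bar>y - d_inv c\<bar>" "\<bar>y - d_inv c\<bar> \<le> 2 * \<epsilon>"
    unfolding annulus_indices_def by blast
  obtain w where w: "w \<in> jsupp {a..b} (gs k)" "y = d_inv w" using y(2) jsupp_comp by blast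
  have wJ: "w \<in> {a..b}" using w(1) jsupp_subset by blast
  define t where "t = \<bar>w - c\<bar>"
  have "\<epsilon> \<le> M2 * t"
    using y(4) M2(2)[OF wJ c] unfolding w(2) t_def by linarith
  then have s1: "1 \<le> M2 * t / \<epsilon>" using \<epsilon> by simp
  have dy: "d y = w" unfolding w(2) using wJ by (rule d_d_inv)
  have "t = \<bar>d y - d (d_inv c)\<bar>" unfolding t_def dy d_d_inv[OF c] ..
  also have "\<dots> \<le> M1 * \<bar>y - d_inv c\<bar>" by (rule M1(2)[OF y(3) d_inv_in[OF c]])
  also have "\<dots> \<le> M1 * (2 * \<epsilon>)" using y(5) M1(1) by (intro mult_left_mono) auto
  finally have "M2 * t / \<epsilon> \<le> 2 * (M1 * M2)"
    using \<epsilon> M2(1) by (simp add: divide_le_eq mult_left_mono algebra_simps)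
  with n have s2: "M2 * t / \<epsilon> \<le> 2 ^ Suc n" by linarith
  obtain j where j: "j \<le> n" "2 ^ j \<le> M2 * t / \<epsilon>" "M2 * t / \<epsilon> \<le> 2 ^ Suc j"
    using dyadic_bracket[OF s1 s2] by blast
  have "\<epsilon> * 2 ^ j / M2 \<le> t" "t \<le> 2 * (\<epsilon> * 2 ^ j / M2)"
    using j(2,3) \<epsilon> M2(1) by (simp_all add: field_simps)
  then have "k \<in> annulus_indices a b c k0 gs (\<epsilon> * 2 ^ j / M2)"
    unfolding annulus_indices_def t_def using y(1) w(1) wJ by blast
  then show "k \<in> (\<Union>j\<le>n. annulus_indices a b c k0 gs (\<epsilon> * 2 ^ j / M2))" using j(1) by blast
qed


lemma annulus_bound_comp:
  assumes c: "c \<in> {a..b}" and bound: "annulus_bound a b c k0 gs (b - a) L L 1"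
  obtains \<epsilon>0 N C where "\<epsilon>0 > 0" "C > 0" "annulus_bound a' b' (d_inv c) k0 (\<lambda>k y. gs k (d y)) \<epsilon>0 N L C"
proof -
  obtain M1 where M1: "M1 \<ge> 1" "\<And>x y. x \<in> {a'..b'} \<Longrightarrow> y \<in> {a'..b'} \<Longrightarrow> \<bar>d x - d y\<bar> \<le> M1 * \<bar>x - y\<bar>"
    using smooth_on_J_lipschitz[OF lt' smooth_d] by blast
  obtain M2 where M2: "M2 \<ge> 1" "\<And>x y. x \<in> {a..b} \<Longrightarrow> y \<in> {a..b} \<Longrightarrow> \<bar>d_inv x - d_inv y\<bar> \<le> M2 * \<bar>x - y\<bar>"
    using smooth_on_J_lipschitz[OF lt smooth_d_inv] by blast
  obtain n :: nat where "M1 * M2 < 2 ^ n" using real_arch_pow[of 2 "M1 * M2"] by auto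
  then have n: "2 * (M1 * M2) \<le> 2 ^ Suc n" by simp
  define \<epsilon>0 where "\<epsilon>0 = M2 * (b - a) / 2 ^ Suc n"
  have "annulus_bound a' b' (d_inv c) k0 (\<lambda>k y. gs k (d y)) \<epsilon>0 (real (Suc n) * L) L (2 ^ n / M2)"
    unfolding annulus_bound_def
  proof (intro allI impI)
    fix \<epsilon> :: real assume \<epsilon>: "0 < \<epsilon> \<and> \<epsilon> < \<epsilon>0 \<and> 2 * \<epsilon> < b' - a'"
    let ?J = "annulus_indices a' b' (d_inv c) k0 (\<lambda>k y. gs k (d y)) \<epsilon>"
    define \<epsilon>j where "\<epsilon>j j = \<epsilon> * 2 ^ j / M2" for j :: nat
    have \<epsilon>j_le: "\<epsilon>j j \<le> 2 ^ n / M2 * \<epsilon>" if "j \<le> n" for j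
      unfolding \<epsilon>j_def using \<epsilon> M2(1) that
      by (simp add: divide_right_mono mult_left_mono power_increasing mult.commute)
    have "2 ^ n / M2 * \<epsilon> < 2 ^ n / M2 * \<epsilon>0" using \<epsilon> M2(1) by (intro mult_strict_left_mono) auto
    also have "\<dots> = (b - a) / 2" unfolding \<epsilon>0_def using M2(1) by (simp add: field_simps)
    finally have \<epsilon>n: "2 ^ n / M2 * \<epsilon> < (b - a) / 2" .
    have J: "finite (annulus_indices a b c k0 gs (\<epsilon>j j))"
      "real (card (annulus_indices a b c k0 gs (\<epsilon>j j))) \<le> L"
      "\<forall>k\<in>annulus_indices a b c k0 gs (\<epsilon>j j). 2 powr (- (real_of_int k * L)) \<le> 1 * \<epsilon>j j"
      if "j \<le> n" for j
    proof -
      have "0 < \<epsilon>j j" using \<epsilon> M2(1) by (simp add: \<epsilon>j_def)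
      moreover have "\<epsilon>j j < (b - a) / 2" using \<epsilon>j_le[OF that] \<epsilon>n by (rule le_less_trans)
      ultimately show "finite (annulus_indices a b c k0 gs (\<epsilon>j j))"
        "real (card (annulus_indices a b c k0 gs (\<epsilon>j j))) \<le> L"
        "\<forall>k\<in>annulus_indices a b c k0 gs (\<epsilon>j j). 2 powr (- (real_of_int k * L)) \<le> 1 * \<epsilon>j j"
        using bound unfolding annulus_bound_def by auto
    qed
    have cover: "?J \<subseteq> (\<Union>j\<le>n. annulus_indices a b c k0 gs (\<epsilon>j j))"
      unfolding \<epsilon>j_def using annulus_indices_comp_subset[OF c _ M1 M2 n] \<epsilon> by blast
    have fin: "finite (\<Union>j\<le>n. annulus_indices a b c k0 gs (\<epsilon>j j))" using J(1) by blast
    have "real (card ?J) \<le> real (card (\<Union>j\<le>n. annulus_indices a b c k0 gs (\<epsilon>j j)))"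
      using card_mono[OF fin cover] by simp
    also have "\<dots> \<le> (\<Sum>j\<le>n. real (card (annulus_indices a b c k0 gs (\<epsilon>j j))))"
      using card_UN_le[of "{..n}" "\<lambda>j. annulus_indices a b c k0 gs (\<epsilon>j j)"] by (simp flip: of_nat_sum)
    also have "\<dots> \<le> (\<Sum>j\<le>n. L)" using J(2) by (intro sum_mono) auto
    finally have "real (card ?J) \<le> real (Suc n) * L" by simp
    moreover have "2 powr (- (real_of_int k * L)) \<le> 2 ^ n / M2 * \<epsilon>" if "k \<in> ?J" for k
      using cover that J(3) \<epsilon>j_le by fastforce
    ultimately show "finite ?J \<and> real (card ?J) \<le> real (Suc n) * L \<and>
        (\<forall>k\<in>?J. 2 powr (- (real_of_int k * L)) \<le> 2 ^ n / M2 * \<epsilon>)"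
      using finite_subset[OF cover fin] by blast
  qed
  moreover have "\<epsilon>0 > 0" "2 ^ n / M2 > 0" using M2(1) lt by (simp_all add: \<epsilon>0_def)
  ultimately show ?thesis using that by blast
qed

lemma pliable_comp:
  assumes cc: "c = a \<or> c = b" and fs: "smooth_on_J {a..b} f"
    and ser: "pliable_series a b c k0 cs gs"
    and fsum: "\<forall>x\<in>{a..b}. ((\<lambda>k. cs k * gs k x) has_sum f x) {k0..}"
  shows "pliable {a'..b'} (d_inv c) (f \<circ> d)"
proof -
  have c: "c \<in> {a..b}" using cc lt by auto
  obtain L where "L > 0" and bound: "annulus_bound a b c k0 gs (b - a) L L 1"
    and ser': "pliable_series_i_ii a b c k0 cs gs"
    using ser unfolding pliable_series_iff by blast
  obtain \<epsilon>0 N C where "\<epsilon>0 > 0" "C > 0"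
    and bound': "annulus_bound a' b' (d_inv c) k0 (\<lambda>k y. gs k (d y)) \<epsilon>0 N L C"
    using annulus_bound_comp[OF c bound] by blast
  have "smooth_on_J {a'..b'} (\<lambda>y. f (d y))"
    using jderivs_comp[OF lt lt' smooth_d _ fs] image by blast
  moreover have "\<forall>y\<in>{a'..b'}. ((\<lambda>k. cs k * gs k (d y)) has_sum f (d y)) {k0..}"
    using fsum d_in by blast
  ultimately have "pliable {a'..b'} (d_inv c) (\<lambda>y. f (d y))"
    by (intro pliable_if_annulus_bound[OF lt' d_inv_endpoint[OF cc] _ pliable_series_i_ii_comp[OF ser' c] bound'])
       (use \<open>\<epsilon>0 > 0\<close> \<open>L > 0\<close> \<open>C > 0\<close> in auto)
  then show ?thesis by (simp add: comp_def)
qed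

end

section \<open>Composition with isometries\<close>

lemma isometry_affine:
  fixes \<iota> :: "real \<Rightarrow> real"
  assumes iso: "\<forall>x y. dist (\<iota> x) (\<iota> y) = dist x y"
  obtains s t where "s = 1 \<or> s = -1" "\<And>x. \<iota> x = s * x + t"
proof -
  define t where "t = \<iota> 0"
  define s where "s = \<iota> 1 - \<iota> 0"
  have "\<bar>s\<bar> = 1" using iso[rule_format, of 1 0] by (simp add: s_def dist_real_def)
  then have s2: "s * s = 1" by (metis abs_mult_self_eq mult_1)
  have "\<iota> x = s * x + t" for x
  proof -
    define u where "u = \<iota> x - t"
    have "\<bar>u\<bar> = \<bar>x\<bar>" using iso[rule_format, of x 0] by (simp add: u_def t_def dist_real_def)
    then have h1: "u * u = x * x" by (metis abs_mult_self_eq)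
    have "\<bar>u - s\<bar> = \<bar>x - 1\<bar>" using iso[rule_format, of x 1] by (simp add: u_def t_def s_def dist_real_def)
    then have h2: "(u - s) * (u - s) = (x - 1) * (x - 1)" by (metis abs_mult_self_eq)
    have "u * s = x" using h1 h2 s2 by (simp add: algebra_simps)
    then have "u = x * s" using s2 by (metis mult.assoc mult.right_neutral)
    then show ?thesis unfolding u_def by (simp add: mult.commute)
  qed
  moreover have "s = 1 \<or> s = -1" using \<open>\<bar>s\<bar> = 1\<close> by auto
  ultimately show ?thesis using that by blast
qed

lemma interval_diffeo_affine:
  assumes ab: "(a::real) < b" and ab': "a' < b'" and s: "s * s = 1"
    and pre: "(\<lambda>x. s * x + t) -` {a..b} = {a'..b'}"
  shows "interval_diffeo a b a' b' (\<lambda>x. s * x + t)"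
    and "y \<in> {a..b} \<Longrightarrow> the_inv_into {a'..b'} (\<lambda>x. s * x + t) y = s * (y - t)"
proof -
  define \<iota> where "\<iota> = (\<lambda>x::real. s * x + t)"
  have inj: "inj \<iota>" unfolding \<iota>_def inj_def using s by (metis add_right_cancel mult.assoc mult_1)
  have inv: "\<iota> (s * (y - t)) = y" for y unfolding \<iota>_def using s by (simp add: mult.assoc[symmetric])
  have in_pre: "s * (y - t) \<in> {a'..b'}" if "y \<in> {a..b}" for y
    using pre inv[of y] that unfolding \<iota>_def by (metis vimageI2 vimage_eq)
  have the_inv: "the_inv_into {a'..b'} \<iota> y = s * (y - t)" if "y \<in> {a..b}" for y
    by (rule the_inv_into_f_eq[OF inj_on_subset[OF inj subset_UNIV] inv in_pre[OF that]])
  then show "y \<in> {a..b} \<Longrightarrow> the_inv_into {a'..b'} (\<lambda>x. s * x + t) y = s * (y - t)"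
    by (simp only: \<iota>_def)
  have "\<iota> ` {a'..b'} = {a..b}"
  proof (intro set_eqI iffI)
    fix y assume "y \<in> \<iota> ` {a'..b'}"
    then show "y \<in> {a..b}" using pre unfolding \<iota>_def by auto
  next
    fix y assume "y \<in> {a..b}"
    then show "y \<in> \<iota> ` {a'..b'}" using in_pre inv by (metis image_eqI)
  qed
  then have "bij_betw \<iota> {a'..b'} {a..b}"
    unfolding bij_betw_def using inj inj_on_subset by blast
  moreover have "smooth_on_J {a..b} (the_inv_into {a'..b'} \<iota>)"
    using smooth_on_J_cong[OF ab smooth_on_J_affine[OF ab, of s "- s * t"]] the_inv
    by (simp add: algebra_simps)
  ultimately show "interval_diffeo a b a' b' (\<lambda>x. s * x + t)"
    using smooth_on_J_affine[OF ab'] ab unfolding interval_diffeo_def diffeo_J_def \<iota>_def by blast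
qed

lemma pliable_comp_isometry:
  assumes ab: "a < b" and cc: "c = a \<or> c = b" and fs: "smooth_on_J {a..b} f"
    and ser: "pliable_series a b c k0 cs gs"
    and fsum: "\<forall>x\<in>{a..b}. ((\<lambda>k. cs k * gs k x) has_sum f x) {k0..}"
    and iso: "\<forall>x y. dist (\<iota> x) (\<iota> y) = dist x y"
  shows "pliable (\<iota> -` {a..b}) (inv \<iota> c) (f \<circ> \<iota>)"
proof -
  obtain s t where st: "s = 1 \<or> s = -1" "\<And>x. \<iota> x = s * x + t"
    using isometry_affine[OF iso] by blast
  have \<iota>: "\<iota> = (\<lambda>x. s * x + t)" using st(2) by auto
  have s: "s * s = 1" using st(1) by auto
  obtain a' b' where ab': "a' < b'" and pre: "(\<lambda>x. s * x + t) -` {a..b} = {a'..b'}"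
  proof (cases "s = 1")
    case True
    then have "(\<lambda>x. s * x + t) -` {a..b} = {a - t..b - t}" by auto
    then show ?thesis using that ab by simp
  next
    case False
    then have "(\<lambda>x. s * x + t) -` {a..b} = {t - b..t - a}" using st(1) by auto
    then show ?thesis using that ab by simp
  qed
  have c: "c \<in> {a..b}" using cc ab by auto
  have "inj \<iota>" unfolding \<iota> inj_def using s by (metis add_right_cancel mult.assoc mult_1)
  moreover have "\<iota> (s * (c - t)) = c" unfolding \<iota> using s by (simp add: mult.assoc[symmetric])
  ultimately have "inv \<iota> c = s * (c - t)" by (rule inv_f_eq)
  also have "\<dots> = the_inv_into {a'..b'} (\<lambda>x. s * x + t) c"
    using interval_diffeo_affine(2)[OF ab ab' s pre c] by simp
  finally show ?thesis
    using interval_diffeo.pliable_comp[OF interval_diffeo_affine(1)[OF ab ab' s pre] cc fs ser fsum]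
    unfolding \<iota> pre by simp
qed

theorem lemma4p1:
  fixes a b c :: real and k0 :: int and cs :: "int \<Rightarrow> real"
    and gs :: "int \<Rightarrow> real \<Rightarrow> real" and f :: "real \<Rightarrow> real"
  assumes ab: "a < b"
    and c: "c = a \<or> c = b"
    and f_smooth: "smooth_on_J {a..b} f"
    and ser: "pliable_series a b c k0 cs gs"
    and f_sum: "\<forall>x\<in>{a..b}. ((\<lambda>k. cs k * gs k x) has_sum f x) {k0..}"
  shows
    "(\<forall>r. ((\<lambda>l. cr_norm {a..b} r (\<lambda>x. f x - (\<Sum>k\<in>{k0..l}. cs k * gs k x))) \<longlongrightarrow> 0) at_top)
   \<and> (\<forall>r. jderivs {a..b} r f c = 0 \<and>
          pliable_series a b c k0 cs (\<lambda>k. jderivs {a..b} r (gs k)) \<and>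
          (\<forall>x\<in>{a..b}. ((\<lambda>k. cs k * jderivs {a..b} r (gs k) x) has_sum jderivs {a..b} r f x) {k0..}) \<and>
          pliable {a..b} c (jderivs {a..b} r f))
   \<and> (\<forall>h g. smooth_on_J {a..b} h \<and> smooth_on_J {a..b} g \<and> jsupp {a..b} g \<subseteq> {a..b} - {c}
          \<longrightarrow> pliable {a..b} c (\<lambda>x. h x * f x + g x))
   \<and> (\<forall>\<iota>::real \<Rightarrow> real. (\<forall>x y. dist (\<iota> x) (\<iota> y) = dist x y)
          \<longrightarrow> pliable (\<iota> -` {a..b}) (inv \<iota> c) (f \<circ> \<iota>))
   \<and> (\<forall>a' b' (d::real \<Rightarrow> real). diffeo_J {a'..b'} {a..b} d
          \<longrightarrow> pliable {a'..b'} (the_inv_into {a'..b'} d c) (f \<circ> d))"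
proof (intro conjI allI impI)
  have ser': "pliable_series_i_ii a b c k0 cs gs" using ser unfolding pliable_series_iff by blast
  fix r
  show "((\<lambda>l. cr_norm {a..b} r (\<lambda>x. f x - (\<Sum>k\<in>{k0..l}. cs k * gs k x))) \<longlongrightarrow> 0) at_top"
    by (rule cr_norm_remainder_tendsto_0[OF ab ser' f_smooth f_sum])
  show "jderivs {a..b} r f c = 0" by (rule jderivs_endpoint_eq_0[OF ab c ser' f_sum])
  show "pliable_series a b c k0 cs (\<lambda>k. jderivs {a..b} r (gs k))"
    by (rule pliable_series_jderivs[OF ab ser])
  show "\<forall>x\<in>{a..b}. ((\<lambda>k. cs k * jderivs {a..b} r (gs k) x) has_sum jderivs {a..b} r f x) {k0..}"
    using jderivs_series_has_sum[OF ab ser' f_sum] by blast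
  show "pliable {a..b} c (jderivs {a..b} r f)" by (rule pliable_jderivs[OF ab c f_smooth ser f_sum])
next
  fix h g
  assume "smooth_on_J {a..b} h \<and> smooth_on_J {a..b} g \<and> jsupp {a..b} g \<subseteq> {a..b} - {c}"
  then show "pliable {a..b} c (\<lambda>x. h x * f x + g x)"
    using pliable_mult_add[OF ab c f_smooth ser f_sum] by blast
next
  fix \<iota> :: "real \<Rightarrow> real"
  assume "\<forall>x y. dist (\<iota> x) (\<iota> y) = dist x y"
  then show "pliable (\<iota> -` {a..b}) (inv \<iota> c) (f \<circ> \<iota>)"
    by (rule pliable_comp_isometry[OF ab c f_smooth ser f_sum])
next
  fix a' b' and d :: "real \<Rightarrow> real"
  assume "diffeo_J {a'..b'} {a..b} d"
  then have "interval_diffeo a b a' b' d" using ab by (simp add: interval_diffeo_def)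
  then show "pliable {a'..b'} (the_inv_into {a'..b'} d c) (f \<circ> d)"
    by (rule interval_diffeo.pliable_comp[OF _ c f_smooth ser f_sum])
qed

end
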